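(* For $k=1,2$ let $b^{(k)}=(b'^{(k)},b_d^{(k)})\in L^1_t(0,t_1;W^{1,\infty}_{(x,y_{loc})}(G\times\mathbb R^p))^d$ with $b^{(k)}_d$ depending only on $(t,x)$ and $b^{(k)}_d(t,x)\le-B^{(k)}_d$ for all $x\in G$ and a.e. $t$, for some $B^{(k)}_d>0$; let $(t_0,x_0)\in S_{t_1}$, $h^{(k)}\in L^\infty(0,t_1;W^{1,\infty}(G))^p$, and let $X^{(k)}(\cdot;t_0,x_0,h^{(k)})$ on $[\tau^{(k)}_-(t_0,x_0,h^{(k)}),t_0]$ be the maximal $\overline G$-valued Carathéodory solution of $X(t)=x_0-\int_t^{t_0}b^{(k)}(s,X(s),h^{(k)}(s,X(s)))ds$. Then for every $s\in[\tau^{(1)}_-(t_0,x_0,h^{(1)})\vee\tau^{(2)}_-(t_0,x_0,h^{(2)}),t_0]$, $$|X^{(2)}(s;t_0,x_0,h^{(2)})-X^{(1)}(s;t_0,x_0,h^{(1)})|\le C_1\big(\|h^{(2)}-h^{(1)}\|_\infty+\|b^{(2)}-b^{(1)}\|_{L^1(0,t_1;h^{(1)},h^{(2)})}\big),$$ where $C_1=\big(1\vee\|D_{(x,y)}b^{(1)}\|_{L^1(0,t_1;h^{(1)},h^{(2)})}\big)\exp\big(\Lambda(D_xh^{(1)},D_xh^{(2)})\|D_{(x,y)}b^{(1)}\|_{L^1(0,t_1;h^{(1)},h^{(2)})}\big)$. Moreover, if $b^{(k)}\in L^-_{x_d}(S_{t_1}\times\mathbb R^p)$ for $k=1,2$,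 then for every $M>0$ there exists $\delta>0$, depending on $h^{(1)},b^{(1)},M$, such that whenever $\|h^{(2)}-h^{(1)}\|_\infty<\delta$, $\|b^{(2)}-b^{(1)}\|_{L^1(0,t_1;h^{(1)},h^{(2)})}<\delta$ and $\|b^{(k)}\|_{L^\infty(0,t_1;h^{(k)})}\le M$ ($k=1,2$), $$|\tau^{(2)}_-(t_0,x_0,h^{(2)})-\tau^{(1)}_-(t_0,x_0,h^{(1)})|+|X^{(2)}(\tau^{(2)}_-(t_0,x_0,h^{(2)});t_0,x_0,h^{(2)})-X^{(1)}(\tau^{(1)}_-(t_0,x_0,h^{(1)});t_0,x_0,h^{(1)})|\le C_5\big(\|h^{(2)}-h^{(1)}\|_\infty+\|b^{(2)}-b^{(1)}\|_{L^1(0,t_1;h^{(1)},h^{(2)})}\big),$$ where $C_5=C\big(1+\bigvee_{k=1,2}\|b^{(k)}\|_{L^\infty(0,t_1;h^{(k)})}\big)\big(1+\|D_{(x,y)}b^{(1)}\|_{L^1(0,t_1;h^{(1)},h^{(2)})}\big)\exp\big[C\big(\bigvee_{k=1,2}\|b^{(k)}\|_{L^\infty(0,t_1;h^{(k)})}+\Lambda(D_xh^{(1)},D_xh^{(2)})\|D_{(x,y)}b^{(1)}\|_{L^1(0,t_1;h^{(1)},h^{(2)})}\big)\big]$ and $C$ depends only on $B^{(k)}_d$, $\|b^{(k)}_d\|_{L^1_{x_d}(0,1;L^\infty_{(t,x')}(S'_{t_1}))}$ ($k=1,2$) and $\|D_{(t,x')}b^{(1)}_d\|_{L^1_{x_d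}(0,1;L^\infty_{(t,x')}(S'_{t_1}))}$.
   Context: $d,p\ge1$, $t_1>0$, $G=\mathbb R^{d-1}\times(0,1)$ with points $x=(x',x_d)$, $S_{t_1}=(0,t_1)\times G$, $S'_{t_1}=(0,t_1)\times\mathbb R^{d-1}$. $L^r_t(0,t_1;L^\infty_{(x,y_{loc})}(G\times\mathbb R^p))=\bigcap_{A>0}L^r(0,t_1;L^\infty(G\times(-A,A)^p))$, likewise with $W^{1,\infty}$. $\|g\|_{L^1_{x_d}(0,1;L^\infty_{(t,x')}(S'_{t_1}))}=\int_0^1\|g(\cdot,\cdot,z)\|_{L^\infty(S'_{t_1})}dz$; $L^1_{x_d}(0,1;W^{1,\infty}_{(t,x')}(S'_{t_1}))$ analogous with $W^{1,\infty}$. $L^-_{x_d}(S_{t_1}\times\mathbb R^p)$: $b=(b',b_d)$ with $b_d$ depending only on $(t,x)$, $b\in L^\infty_t(0,t_1;L^\infty_{(x,y_{loc})})^d\cap L^1_t(0,t_1;W^{1,\infty}_{(x,y_{loc})})^d$, $b_d\in L^1_{x_d}(0,1;W^{1,\infty}_{(t,x')}(S'_{t_1}))$, $b_d\le-B_d<0$. $\vee=\max$, $\bigvee$ = max over $k$. $\|h\|_\infty=\|h\|_{L^\infty(S_{t_1})}$; $\Lambda(\alpha,\overline\alpha)=1+\|\alpha\|_\infty\vee\|\overline\alpha\|_\infty$; with $R=\|h\|_\infty\vee\|\overline h\|_\infty$, $\|g\|_{L^r(0,t_1;h,\overline h)}=\|g\|_{L^r(0,t_1;L^\infty(G\times(-R,R)^p))}$,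 and $(\ldots;h)$ means $h=\overline h$. *)

theory Defs
  imports "HOL-Analysis.Analysis"
begin

text \<open>Points of R^d are vectors real^'d; the distinguished index dd plays
the role of the last coordinate x_d, so that x = (x', x_d). Points of R^p are real^'p.
All norms are Euclidean; norms of derivatives are operator norms, realised through
Lipschitz constants (on convex domains the L-infinity norm of the weak gradient of a
W^{1,infinity} function equals its Lipschitz constant).\<close>

definition Gset :: "'d::finite \<Rightarrow> (real^'d) set" where
  "Gset dd = {x. 0 < x$dd \<and> x$dd < 1}"

definition Gbar :: "'d::finite \<Rightarrow> (real^'d) set" where
  "Gbar dd = closure (Gset dd)"

definition cube :: "real \<Rightarrow> (real^'p::finite) set" where
  "cube A = {y. \<forall>i. \<bar>y$i\<bar> \<le> A}"

definition Dom :: "'d::finite \<Rightarrow> real \<Rightarrow> ((real^'d) \<times> (real^'p::finite)) set" where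
  "Dom dd A = Gbar dd \<times> cube A"

definition supn :: "'a set \<Rightarrow> ('a \<Rightarrow> 'b::real_normed_vector) \<Rightarrow> ennreal" where
  "supn S f = (SUP z\<in>S. ennreal (norm (f z)))"

definition lipc :: "('a::metric_space) set \<Rightarrow> ('a \<Rightarrow> 'b::metric_space) \<Rightarrow> ennreal" where
  "lipc S f = (SUP z\<in>S. SUP w\<in>S - {z}. ennreal (dist (f z) (f w) / dist z w))"

definition ess_sup_t :: "real \<Rightarrow> (real \<Rightarrow> ennreal) \<Rightarrow> ennreal" where
  "ess_sup_t t1 F = Inf {c. AE t in lborel. t \<in> {0<..<t1} \<longrightarrow> F t \<le> c}"

definition L1_t :: "real \<Rightarrow> (real \<Rightarrow> ennreal) \<Rightarrow> ennreal" where
  "L1_t t1 F = (\<integral>\<^sup>+ t. indicator {0<..<t1} t * F t \<partial>lborel)"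

definition bxy :: "(real \<Rightarrow> real^'d \<Rightarrow> real^'p \<Rightarrow> real^'d) \<Rightarrow> real \<Rightarrow> ((real^'d) \<times> (real^'p) \<Rightarrow> real^'d)" where
  "bxy b t = (\<lambda>(x,y). b t x y)"

text \<open>b in L^1_t(0,t1;W^{1,infinity}_{(x,y_loc)}(G x R^p))^d (continuous representative)\<close>
definition L1W1inf_loc :: "real \<Rightarrow> 'd::finite \<Rightarrow> (real \<Rightarrow> real^'d \<Rightarrow> real^'p::finite \<Rightarrow> real^'d) \<Rightarrow> bool" where
  "L1W1inf_loc t1 dd b \<longleftrightarrow>
     (\<lambda>(t,x,y). b t x y) \<in> borel_measurable borel \<and>
     (\<forall>A>0. (AE t in lborel. t \<in> {0<..<t1} \<longrightarrow>
                 supn (Dom dd A) (bxy b t) < \<infinity> \<and> lipc (Dom dd A) (bxy b t) < \<infinity>) \<and>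
            L1_t t1 (\<lambda>t. supn (Dom dd A) (bxy b t) + lipc (Dom dd A) (bxy b t)) < \<infinity>)"

definition LinfLinf_loc :: "real \<Rightarrow> 'd::finite \<Rightarrow> (real \<Rightarrow> real^'d \<Rightarrow> real^'p::finite \<Rightarrow> real^'d) \<Rightarrow> bool" where
  "LinfLinf_loc t1 dd b \<longleftrightarrow> (\<forall>A>0. ess_sup_t t1 (\<lambda>t. supn (Dom dd A) (bxy b t)) < \<infinity>)"

definition bd_indep_y :: "'d::finite \<Rightarrow> (real \<Rightarrow> real^'d \<Rightarrow> real^'p::finite \<Rightarrow> real^'d) \<Rightarrow> bool" where
  "bd_indep_y dd b \<longleftrightarrow> (\<forall>t x y y'. b t x y $ dd = b t x y' $ dd)"

definition bdc :: "'d::finite \<Rightarrow> (real \<Rightarrow> real^'d \<Rightarrow> real^'p::finite \<Rightarrow> real^'d) \<Rightarrow> real \<Rightarrow> real^'d \<Rightarrow> real" where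
  "bdc dd b t x = b t x 0 $ dd"

definition bd_neg :: "real \<Rightarrow> 'd::finite \<Rightarrow> real \<Rightarrow> (real \<Rightarrow> real^'d \<Rightarrow> real^'p::finite \<Rightarrow> real^'d) \<Rightarrow> bool" where
  "bd_neg t1 dd B b \<longleftrightarrow> (\<forall>x\<in>Gset dd. AE t in lborel. t \<in> {0<..<t1} \<longrightarrow> bdc dd b t x \<le> - B)"

text \<open>slices x_d = z: the point (x', z) is represented as x with its dd-th coordinate replaced by z;
  "a.e. (t,x') in S'_{t1}" is expressed through Lebesgue measure on (0,t1) x R^d.\<close>
definition upd :: "'d::finite \<Rightarrow> real \<Rightarrow> real^'d \<Rightarrow> real^'d" where
  "upd dd z x = (\<chi> i. if i = dd then z else x$i)"

definition Sslice :: "real \<Rightarrow> 'd::finite \<Rightarrow> real \<Rightarrow> (real \<times> (real^'d)) set" where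
  "Sslice t1 dd z = {(t,x). 0 < t \<and> t < t1 \<and> x$dd = z}"

definition AE_slice :: "real \<Rightarrow> 'd::finite \<Rightarrow> real \<Rightarrow> (real \<Rightarrow> real^'d \<Rightarrow> bool) \<Rightarrow> bool" where
  "AE_slice t1 dd z P \<longleftrightarrow>
     (AE q in (lborel :: (real \<times> (real^'d)) measure). fst q \<in> {0<..<t1} \<longrightarrow> P (fst q) (upd dd z (snd q)))"

definition slice_Linf :: "real \<Rightarrow> 'd::finite \<Rightarrow> (real \<Rightarrow> real^'d \<Rightarrow> real) \<Rightarrow> real \<Rightarrow> ennreal" where
  "slice_Linf t1 dd f z = Inf {c. AE_slice t1 dd z (\<lambda>t x. ennreal \<bar>f t x\<bar> \<le> c)}"

text \<open>|| D_{(t,x')} f(.,.,z) ||_{L^infinity(S'_{t1})}, as the (essential) Lipschitz constant\<close>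
definition slice_Lip :: "real \<Rightarrow> 'd::finite \<Rightarrow> (real \<Rightarrow> real^'d \<Rightarrow> real) \<Rightarrow> real \<Rightarrow> ennreal" where
  "slice_Lip t1 dd f z = Inf {L. \<exists>g::real \<Rightarrow> real^'d \<Rightarrow> real.
      (\<forall>p\<in>Sslice t1 dd z. \<forall>q\<in>Sslice t1 dd z.
          ennreal \<bar>g (fst p) (snd p) - g (fst q) (snd q)\<bar> \<le> L * ennreal (dist p q)) \<and>
      AE_slice t1 dd z (\<lambda>t x. g t x = f t x)}"

definition Lminus :: "real \<Rightarrow> 'd::finite \<Rightarrow> (real \<Rightarrow> real^'d \<Rightarrow> real^'p::finite \<Rightarrow> real^'d) \<Rightarrow> bool" where
  "Lminus t1 dd b \<longleftrightarrow>
     bd_indep_y dd b \<and> LinfLinf_loc t1 dd b \<and> L1W1inf_loc t1 dd b \<and>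
     (AE z in lborel. z \<in> {0<..<1} \<longrightarrow>
        slice_Linf t1 dd (bdc dd b) z + slice_Lip t1 dd (bdc dd b) z < \<infinity>) \<and>
     (\<integral>\<^sup>+ z. indicator {0<..<1} z * (slice_Linf t1 dd (bdc dd b) z + slice_Lip t1 dd (bdc dd b) z) \<partial>lborel) < \<infinity> \<and>
     (\<exists>B>0. bd_neg t1 dd B b)"

definition bd_L1Linf :: "real \<Rightarrow> 'd::finite \<Rightarrow> (real \<Rightarrow> real^'d \<Rightarrow> real^'p::finite \<Rightarrow> real^'d) \<Rightarrow> ennreal" where
  "bd_L1Linf t1 dd b = (\<integral>\<^sup>+ z. indicator {0<..<1} z * slice_Linf t1 dd (bdc dd b) z \<partial>lborel)"

definition Dbd_L1Linf :: "real \<Rightarrow> 'd::finite \<Rightarrow> (real \<Rightarrow> real^'d \<Rightarrow> real^'p::finite \<Rightarrow> real^'d) \<Rightarrow> ennreal" where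
  "Dbd_L1Linf t1 dd b = (\<integral>\<^sup>+ z. indicator {0<..<1} z * slice_Lip t1 dd (bdc dd b) z \<partial>lborel)"

text \<open>h in L^infinity(0,t1;W^{1,infinity}(G))^p (representative continuous up to the boundary)\<close>
definition LinfW1inf :: "real \<Rightarrow> 'd::finite \<Rightarrow> (real \<Rightarrow> real^'d \<Rightarrow> real^'p::finite) \<Rightarrow> bool" where
  "LinfW1inf t1 dd h \<longleftrightarrow>
     (\<lambda>(t,x). h t x) \<in> borel_measurable borel \<and>
     (AE t in lborel. t \<in> {0<..<t1} \<longrightarrow> supn (Gbar dd) (h t) < \<infinity> \<and> lipc (Gbar dd) (h t) < \<infinity>) \<and>
     ess_sup_t t1 (\<lambda>t. supn (Gset dd) (h t) + lipc (Gset dd) (h t)) < \<infinity>"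

definition Linf_S :: "real \<Rightarrow> 'd::finite \<Rightarrow> (real \<Rightarrow> real^'d \<Rightarrow> real^'p::finite) \<Rightarrow> ennreal" where
  "Linf_S t1 dd h = Inf {c. AE q in (lborel :: (real \<times> (real^'d)) measure).
       q \<in> {0<..<t1} \<times> Gset dd \<longrightarrow> ennreal (norm (h (fst q) (snd q))) \<le> c}"

definition DxLinf_S :: "real \<Rightarrow> 'd::finite \<Rightarrow> (real \<Rightarrow> real^'d \<Rightarrow> real^'p::finite) \<Rightarrow> ennreal" where
  "DxLinf_S t1 dd h = ess_sup_t t1 (\<lambda>t. lipc (Gset dd) (h t))"

definition Lam :: "real \<Rightarrow> 'd::finite \<Rightarrow> (real \<Rightarrow> real^'d \<Rightarrow> real^'p::finite) \<Rightarrow> (real \<Rightarrow> real^'d \<Rightarrow> real^'p) \<Rightarrow> ennreal" where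
  "Lam t1 dd h1 h2 = 1 + max (DxLinf_S t1 dd h1) (DxLinf_S t1 dd h2)"

definition Rad :: "real \<Rightarrow> 'd::finite \<Rightarrow> (real \<Rightarrow> real^'d \<Rightarrow> real^'p::finite) \<Rightarrow> (real \<Rightarrow> real^'d \<Rightarrow> real^'p) \<Rightarrow> real" where
  "Rad t1 dd h1 h2 = enn2real (max (Linf_S t1 dd h1) (Linf_S t1 dd h2))"

definition L1_h :: "real \<Rightarrow> 'd::finite \<Rightarrow> (real \<Rightarrow> real^'d \<Rightarrow> real^'p::finite) \<Rightarrow> (real \<Rightarrow> real^'d \<Rightarrow> real^'p)
     \<Rightarrow> (real \<Rightarrow> real^'d \<Rightarrow> real^'p \<Rightarrow> real^'d) \<Rightarrow> ennreal" where
  "L1_h t1 dd h1 h2 g = L1_t t1 (\<lambda>t. supn (Dom dd (Rad t1 dd h1 h2)) (bxy g t))"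

definition Linf_h :: "real \<Rightarrow> 'd::finite \<Rightarrow> (real \<Rightarrow> real^'d \<Rightarrow> real^'p::finite) \<Rightarrow> (real \<Rightarrow> real^'d \<Rightarrow> real^'p)
     \<Rightarrow> (real \<Rightarrow> real^'d \<Rightarrow> real^'p \<Rightarrow> real^'d) \<Rightarrow> ennreal" where
  "Linf_h t1 dd h1 h2 g = ess_sup_t t1 (\<lambda>t. supn (Dom dd (Rad t1 dd h1 h2)) (bxy g t))"

definition DL1_h :: "real \<Rightarrow> 'd::finite \<Rightarrow> (real \<Rightarrow> real^'d \<Rightarrow> real^'p::finite) \<Rightarrow> (real \<Rightarrow> real^'d \<Rightarrow> real^'p)
     \<Rightarrow> (real \<Rightarrow> real^'d \<Rightarrow> real^'p \<Rightarrow> real^'d) \<Rightarrow> ennreal" where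
  "DL1_h t1 dd h1 h2 g = L1_t t1 (\<lambda>t. lipc (Dom dd (Rad t1 dd h1 h2)) (bxy g t))"

definition is_sol :: "'d::finite \<Rightarrow> (real \<Rightarrow> real^'d \<Rightarrow> real^'p::finite \<Rightarrow> real^'d) \<Rightarrow> (real \<Rightarrow> real^'d \<Rightarrow> real^'p)
     \<Rightarrow> real \<Rightarrow> real^'d \<Rightarrow> real \<Rightarrow> (real \<Rightarrow> real^'d) \<Rightarrow> bool" where
  "is_sol dd b h t0 x0 tau X \<longleftrightarrow>
     (\<forall>t\<in>{tau..t0}. X t \<in> Gbar dd \<and>
        set_integrable lborel {t..t0} (\<lambda>s. b s (X s) (h s (X s))) \<and>
        X t = x0 - (LINT s:{t..t0}|lborel. b s (X s) (h s (X s))))"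

definition max_sol :: "'d::finite \<Rightarrow> (real \<Rightarrow> real^'d \<Rightarrow> real^'p::finite \<Rightarrow> real^'d) \<Rightarrow> (real \<Rightarrow> real^'d \<Rightarrow> real^'p)
     \<Rightarrow> real \<Rightarrow> real^'d \<Rightarrow> real \<Rightarrow> (real \<Rightarrow> real^'d) \<Rightarrow> bool" where
  "max_sol dd b h t0 x0 tau X \<longleftrightarrow>
     0 \<le> tau \<and> tau \<le> t0 \<and> is_sol dd b h t0 x0 tau X \<and>
     (\<forall>tau' Y. 0 \<le> tau' \<and> tau' < tau \<longrightarrow> \<not> is_sol dd b h t0 x0 tau' Y)"

end

theory Submission
  imports Defs
begin

text \<open>Subtracting the integral equations of the two characteristics, the difference of the drifts
along them is bounded by the size of \<open>b2 - b1\<close> and of \<open>h2 - h1\<close> plus the Lipschitz constant of \<open>b1\<close>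
times \<open>\<Lambda> |X2 - X1|\<close>; a backward Gronwall inequality gives the first estimate.

Since \<open>b_d \<le> -B_d\<close>, the last coordinate of a characteristic grows at rate at least \<open>B_d\<close> backwards
in time. Hence a maximal solution with \<open>\<tau>_- > 0\<close> ends on the face \<open>x_d = 1\<close>: otherwise it ends at an
interior point of \<open>G\<close>, from which a contraction argument continues it further back. If, say,
\<open>tau1 < tau2\<close>, then at time \<open>tau2\<close> the first characteristic is within the first estimate of that
face, so it reaches it within that distance divided by \<open>B1\<close>, and its speed bound controls the
distance between the exit points. The constant \<open>C = 1 + 1/B1 + 1/B2\<close> suffices.\<close>

lemma AE_le_Inf_AE_bounds:
  fixes f :: "'a \<Rightarrow> ennreal"
  shows "AE x in M. P x \<longrightarrow> f x \<le> Inf {c. AE x in M. P x \<longrightarrow> f x \<le> c}"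
proof (cases "Inf {c. AE x in M. P x \<longrightarrow> f x \<le> c} = \<infinity>")
  case True show ?thesis unfolding True by simp
next
  case False
  define S where "S = {c. AE x in M. P x \<longrightarrow> f x \<le> c}"
  define c where "c = Inf S"
  have "c \<noteq> \<infinity>" using False unfolding c_def S_def .
  then have cfin: "c < \<infinity>" by (simp add: less_top)
  have "\<exists>d\<in>S. d < c + ennreal (1/Suc n)" for n :: nat
  proof -
    have "c + 0 < c + ennreal (1/Suc n)"
      by (subst ennreal_add_left_cancel_less) (use cfin in auto)
    then show ?thesis unfolding c_def by (simp add: Inf_less_iff)
  qed
  then obtain d where d: "\<And>n. d n \<in> S" "\<And>n. d n < c + ennreal (1/Suc n)" by metis
  have "AE x in M. \<forall>n. P x \<longrightarrow> f x \<le> d n"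
    using d(1) unfolding S_def by (intro AE_all_countable[THEN iffD2] allI) auto
  then have "AE x in M. P x \<longrightarrow> f x \<le> c"
  proof eventually_elim
    case (elim x)
    show ?case
    proof
      assume Px: "P x"
      show "f x \<le> c"
      proof (rule ennreal_le_epsilon)
        fix e :: real assume "0 < e"
        then obtain n :: nat where "inverse (real (Suc n)) < e"
          using reals_Archimedean by blast
        then have n: "1 / Suc n < e" by (simp add: inverse_eq_divide)
        have "f x \<le> d n" using elim Px by auto
        also have "\<dots> \<le> c + ennreal (1/Suc n)" using d(2)[of n] by simp
        also have "\<dots> \<le> c + ennreal e" using n by (intro add_left_mono ennreal_leI) simp
        finally show "f x \<le> c + ennreal e" .
      qed
    qed
  qed
  then show ?thesis unfolding c_def S_def .
qed

lemma AE_le_ess_sup_t: "AE t in lborel. t \<in> {0<..<t1} \<longrightarrow> F t \<le> ess_sup_t t1 F"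
  unfolding ess_sup_t_def by (rule AE_le_Inf_AE_bounds)

lemma ess_sup_t_least: "(AE t in lborel. t \<in> {0<..<t1} \<longrightarrow> F t \<le> c) \<Longrightarrow> ess_sup_t t1 F \<le> c"
  unfolding ess_sup_t_def by (rule Inf_lower) simp

lemma ess_sup_t_mono:
  assumes "\<And>t. F t \<le> G t" shows "ess_sup_t t1 F \<le> ess_sup_t t1 G"
proof (rule ess_sup_t_least)
  show "AE t in lborel. t \<in> {0<..<t1} \<longrightarrow> F t \<le> ess_sup_t t1 G"
    using AE_le_ess_sup_t[of t1 G] by eventually_elim (use assms order_trans in blast)
qed

lemma le_enn2real_if_ennreal_le: "ennreal a \<le> L \<Longrightarrow> L < \<infinity> \<Longrightarrow> 0 \<le> a \<Longrightarrow> a \<le> enn2real L"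
  using enn2real_mono[of "ennreal a" L] by simp

lemma ennreal_enn2real_le: "ennreal (enn2real x) \<le> x"
  by (cases "x = top") (auto simp: ennreal_enn2real_if)

lemma norm_le_supn: "z \<in> S \<Longrightarrow> ennreal (norm (f z)) \<le> supn S f"
  unfolding supn_def by (rule SUP_upper)

lemma norm_le_enn2real_supn: "supn S f < \<infinity> \<Longrightarrow> z \<in> S \<Longrightarrow> norm (f z) \<le> enn2real (supn S f)"
  using norm_le_supn[of z S f] by (intro le_enn2real_if_ennreal_le) auto

lemma supn_mono: "S \<subseteq> T \<Longrightarrow> supn S f \<le> supn T f"
  unfolding supn_def by (rule SUP_subset_mono) auto

lemma supn_diff_le: "supn S (\<lambda>z. f z - g z) \<le> supn S f + supn S g"
  unfolding supn_def
proof (rule SUP_least)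
  fix z assume z: "z \<in> S"
  have "ennreal (norm (f z - g z)) \<le> ennreal (norm (f z)) + ennreal (norm (g z))"
    by (simp add: ennreal_plus[symmetric] ennreal_leI norm_triangle_ineq4 del: ennreal_plus)
  also have "\<dots> \<le> (SUP z\<in>S. ennreal (norm (f z))) + (SUP z\<in>S. ennreal (norm (g z)))"
    using z by (intro add_mono SUP_upper)
  finally show "ennreal (norm (f z - g z)) \<le> (SUP z\<in>S. ennreal (norm (f z))) + (SUP z\<in>S. ennreal (norm (g z)))" .
qed

lemma dist_le_lipc:
  assumes "lipc S f < \<infinity>" "z \<in> S" "w \<in> S"
  shows "dist (f z) (f w) \<le> enn2real (lipc S f) * dist z w"
proof (cases "z = w")
  case True show ?thesis unfolding True by simp
next
  case False
  have "ennreal (dist (f z) (f w) / dist z w) \<le> (SUP w\<in>S - {z}. ennreal (dist (f z) (f w) / dist z w))"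
    using assms False by (intro SUP_upper) auto
  also have "\<dots> \<le> lipc S f" unfolding lipc_def using assms(2) by (rule SUP_upper)
  finally have "dist (f z) (f w) / dist z w \<le> enn2real (lipc S f)"
    using assms(1) by (intro le_enn2real_if_ennreal_le) auto
  then show ?thesis using False by (simp add: divide_le_eq mult.commute)
qed

lemma lipc_mono: "S \<subseteq> T \<Longrightarrow> lipc S f \<le> lipc T f"
  unfolding lipc_def by (intro SUP_subset_mono) auto

lemma lipschitz_on_lipc: "lipc S f < \<infinity> \<Longrightarrow> (enn2real (lipc S f))-lipschitz_on S f"
  using dist_le_lipc by (intro lipschitz_onI) auto

lemma continuous_on_if_lipc_finite: "lipc S f < \<infinity> \<Longrightarrow> continuous_on S f"
  by (rule lipschitz_on_continuous_on[OF lipschitz_on_lipc])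

text \<open>On a separable domain a continuous function has the same sup norm and Lipschitz constant as its
restriction to a countable dense subset; this makes both quantities measurable in time.\<close>

lemma supn_eq_SUP_dense:
  fixes g :: "'z::metric_space \<Rightarrow> 'v::real_normed_vector"
  assumes "continuous_on S g" "D \<subseteq> S" "S \<subseteq> closure D"
  shows "supn S g = (SUP z\<in>D. ennreal (norm (g z)))"
proof (rule antisym)
  show "supn S g \<le> (SUP z\<in>D. ennreal (norm (g z)))" unfolding supn_def
  proof (rule SUP_least)
    fix z assume "z \<in> S"
    then obtain x where x: "\<forall>n. x n \<in> D" "x \<longlonglongrightarrow> z" using assms(3) closure_sequential by blast
    have "(\<lambda>n. g (x n)) \<longlonglongrightarrow> g z"
      using assms(1) \<open>z \<in> S\<close> x assms(2) unfolding continuous_on_sequentially comp_def by blast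
    then have "(\<lambda>n. ennreal (norm (g (x n)))) \<longlonglongrightarrow> ennreal (norm (g z))"
      by (intro tendsto_ennrealI tendsto_norm)
    then show "ennreal (norm (g z)) \<le> (SUP z\<in>D. ennreal (norm (g z)))"
    proof (rule LIMSEQ_le_const2, intro exI allI impI)
      fix n show "ennreal (norm (g (x n))) \<le> (SUP z\<in>D. ennreal (norm (g z)))"
        using x(1) by (intro SUP_upper) auto
    qed
  qed
  show "(SUP z\<in>D. ennreal (norm (g z))) \<le> supn S g" unfolding supn_def
    using assms(2) by (rule SUP_subset_mono) simp
qed

lemma lipc_eq_SUP_dense:
  fixes g :: "'z::metric_space \<Rightarrow> 'v::metric_space"
  assumes "continuous_on S g" "D \<subseteq> S" "S \<subseteq> closure D"
  shows "lipc S g = (SUP z\<in>D. SUP w\<in>D - {z}. ennreal (dist (g z) (g w) / dist z w))"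
proof (rule antisym)
  let ?R = "(SUP z\<in>D. SUP w\<in>D - {z}. ennreal (dist (g z) (g w) / dist z w))"
  show "lipc S g \<le> ?R" unfolding lipc_def
  proof (intro SUP_least)
    fix z w assume z: "z \<in> S" and w: "w \<in> S - {z}"
    obtain x where x: "\<forall>n. x n \<in> D" "x \<longlonglongrightarrow> z" using assms(3) z closure_sequential by blast
    obtain y where y: "\<forall>n. y n \<in> D" "y \<longlonglongrightarrow> w" using assms(3) w closure_sequential by blast
    have gx: "(\<lambda>n. g (x n)) \<longlonglongrightarrow> g z"
      using assms(1) z x assms(2) unfolding continuous_on_sequentially comp_def by blast
    have gy: "(\<lambda>n. g (y n)) \<longlonglongrightarrow> g w"
      using assms(1) w y assms(2) unfolding continuous_on_sequentially comp_def by blast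
    have dxy: "(\<lambda>n. dist (x n) (y n)) \<longlonglongrightarrow> dist z w" using x(2) y(2) by (rule tendsto_dist)
    have dzw: "dist z w > 0" using w by auto
    have lim: "(\<lambda>n. ennreal (dist (g (x n)) (g (y n)) / dist (x n) (y n))) \<longlonglongrightarrow> ennreal (dist (g z) (g w) / dist z w)"
      using dzw by (intro tendsto_ennrealI tendsto_divide tendsto_dist gx gy dxy) auto
    have "eventually (\<lambda>n. dist (x n) (y n) > 0) sequentially"
      using dxy dzw by (rule order_tendstoD)
    then obtain N where N: "\<And>n. n \<ge> N \<Longrightarrow> dist (x n) (y n) > 0" by (auto simp: eventually_sequentially)
    show "ennreal (dist (g z) (g w) / dist z w) \<le> ?R"
    proof (rule LIMSEQ_le_const2[OF lim], intro exI allI impI)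
      fix n assume "n \<ge> N"
      then have "x n \<noteq> y n" using N by fastforce
      then have "ennreal (dist (g (x n)) (g (y n)) / dist (x n) (y n)) \<le> (SUP w\<in>D - {x n}. ennreal (dist (g (x n)) (g w) / dist (x n) w))"
        using y(1) by (intro SUP_upper) auto
      also have "\<dots> \<le> ?R" using x(1) by (intro SUP_upper) auto
      finally show "ennreal (dist (g (x n)) (g (y n)) / dist (x n) (y n)) \<le> ?R" .
    qed
  qed
  show "?R \<le> lipc S g" unfolding lipc_def
    using assms(2) by (intro SUP_subset_mono) auto
qed

lemma borel_measurable_section:
  fixes g :: "real \<Rightarrow> 'z::{metric_space, second_countable_topology} \<Rightarrow> 'v::{metric_space, second_countable_topology}"
  assumes "(\<lambda>(t,z). g t z) \<in> borel_measurable borel"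
  shows "(\<lambda>t. g t z) \<in> borel_measurable borel"
proof -
  have "(\<lambda>t. (t, z)) \<in> borel_measurable borel"
    by (intro borel_measurable_continuous_onI continuous_intros)
  from measurable_compose[OF this assms] show ?thesis by simp
qed

lemma borel_measurable_supn_representative:
  fixes g :: "real \<Rightarrow> 'z::{metric_space, second_countable_topology} \<Rightarrow> 'v::{real_normed_vector, second_countable_topology}"
  assumes "(\<lambda>(t,z). g t z) \<in> borel_measurable borel"
  obtains G where "G \<in> borel_measurable borel" "\<And>t. continuous_on S (g t) \<Longrightarrow> supn S (g t) = G t"
proof -
  obtain D where D: "countable D" "D \<subseteq> S" "S \<subseteq> closure D" by (rule separable)
  show ?thesis
  proof
    show "(\<lambda>t. SUP z\<in>D. ennreal (norm (g t z))) \<in> borel_measurable borel"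
    proof (intro borel_measurable_SUP D(1))
      fix z have [measurable]: "(\<lambda>t. g t z) \<in> borel_measurable borel"
        by (rule borel_measurable_section[OF assms])
      show "(\<lambda>t. ennreal (norm (g t z))) \<in> borel_measurable borel" by measurable
    qed
    show "supn S (g t) = (SUP z\<in>D. ennreal (norm (g t z)))" if "continuous_on S (g t)" for t
      using supn_eq_SUP_dense[OF that D(2,3)] .
  qed
qed

lemma borel_measurable_lipc_representative:
  fixes g :: "real \<Rightarrow> 'z::{metric_space, second_countable_topology} \<Rightarrow> 'v::{metric_space, second_countable_topology}"
  assumes "(\<lambda>(t,z). g t z) \<in> borel_measurable borel"
  obtains G where "G \<in> borel_measurable borel" "\<And>t. continuous_on S (g t) \<Longrightarrow> lipc S (g t) = G t"
proof -
  obtain D where D: "countable D" "D \<subseteq> S" "S \<subseteq> closure D" by (rule separable)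
  show ?thesis
  proof
    show "(\<lambda>t. SUP z\<in>D. SUP w\<in>D - {z}. ennreal (dist (g t z) (g t w) / dist z w)) \<in> borel_measurable borel"
    proof (intro borel_measurable_SUP countable_Diff D(1))
      fix z w have [measurable]: "(\<lambda>t. g t z) \<in> borel_measurable borel" "(\<lambda>t. g t w) \<in> borel_measurable borel"
        by (rule borel_measurable_section[OF assms])+
      show "(\<lambda>t. ennreal (dist (g t z) (g t w) / dist z w)) \<in> borel_measurable borel" by measurable
    qed
    show "lipc S (g t) = (SUP z\<in>D. SUP w\<in>D - {z}. ennreal (dist (g t z) (g t w) / dist z w))"
      if "continuous_on S (g t)" for t
      using lipc_eq_SUP_dense[OF that D(2,3)] .
  qed
qed

lemma L1_t_finite_set_integral:
  fixes F G :: "real \<Rightarrow> ennreal"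
  assumes G: "G \<in> borel_measurable borel" and eq: "AE t in lborel. t \<in> {0<..<t1} \<longrightarrow> F t = G t"
    and fin: "L1_t t1 F < \<infinity>" and s: "0 \<le> s" and t0: "t0 < t1"
  shows "set_integrable lborel {s..t0} (\<lambda>t. enn2real (G t))"
    and "(LINT t:{s..t0}|lborel. enn2real (G t)) \<le> enn2real (L1_t t1 F)"
proof -
  have [measurable]: "G \<in> borel_measurable lborel" using G by (simp add: measurable_lborel1)
  have L: "L1_t t1 F = (\<integral>\<^sup>+ t. indicator {0<..<t1} t * G t \<partial>lborel)"
    unfolding L1_t_def using eq by (intro nn_integral_cong_AE) (auto elim!: AE_mp simp: indicator_def)
  have ineq: "AE t in lborel. ennreal (norm (indicator {s..t0} t *\<^sub>R enn2real (G t))) \<le> indicator {0<..<t1} t * G t"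
    using AE_lborel_singleton[of 0]
  proof eventually_elim
    case (elim t)
    show ?case
    proof (cases "t \<in> {s..t0}")
      case True
      then have "t \<in> {0<..<t1}" using elim s t0 by auto
      then show ?thesis using True by (simp add: ennreal_enn2real_le)
    qed simp
  qed
  have nn: "(\<integral>\<^sup>+ t. ennreal (norm (indicator {s..t0} t *\<^sub>R enn2real (G t))) \<partial>lborel) \<le> L1_t t1 F"
    unfolding L by (rule nn_integral_mono_AE[OF ineq])
  have m: "(\<lambda>t. indicator {s..t0} t *\<^sub>R enn2real (G t)) \<in> borel_measurable lborel" by measurable
  show int: "set_integrable lborel {s..t0} (\<lambda>t. enn2real (G t))"
    unfolding set_integrable_def using m by (rule integrableI_bounded) (rule le_less_trans[OF nn fin])
  have "(LINT t:{s..t0}|lborel. enn2real (G t)) = enn2real (\<integral>\<^sup>+ t. ennreal (indicator {s..t0} t *\<^sub>R enn2real (G t)) \<partial>lborel)"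
    unfolding set_lebesgue_integral_def by (rule integral_eq_nn_integral[OF m]) (auto simp: indicator_def)
  also have "\<dots> \<le> enn2real (L1_t t1 F)"
    using nn fin by (intro enn2real_mono) (auto simp: indicator_def)
  finally show "(LINT t:{s..t0}|lborel. enn2real (G t)) \<le> enn2real (L1_t t1 F)" .
qed

lemma L1_t_finite_if_AE_le_add:
  fixes F F1 F2 G1 G2 :: "real \<Rightarrow> ennreal"
  assumes G: "G1 \<in> borel_measurable borel" "G2 \<in> borel_measurable borel"
    and eq: "AE t in lborel. t \<in> {0<..<t1} \<longrightarrow> F1 t = G1 t \<and> F2 t = G2 t"
    and le: "AE t in lborel. t \<in> {0<..<t1} \<longrightarrow> F t \<le> F1 t + F2 t"
    and fin: "L1_t t1 F1 < \<infinity>" "L1_t t1 F2 < \<infinity>"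
  shows "L1_t t1 F < \<infinity>"
proof -
  have [measurable]: "G1 \<in> borel_measurable lborel" "G2 \<in> borel_measurable lborel"
    using G by (simp_all add: measurable_lborel1)
  have e1: "L1_t t1 F1 = (\<integral>\<^sup>+ t. indicator {0<..<t1} t * G1 t \<partial>lborel)"
    unfolding L1_t_def using eq by (intro nn_integral_cong_AE) (auto elim!: AE_mp simp: indicator_def)
  have e2: "L1_t t1 F2 = (\<integral>\<^sup>+ t. indicator {0<..<t1} t * G2 t \<partial>lborel)"
    unfolding L1_t_def using eq by (intro nn_integral_cong_AE) (auto elim!: AE_mp simp: indicator_def)
  have "L1_t t1 F \<le> (\<integral>\<^sup>+ t. indicator {0<..<t1} t * G1 t + indicator {0<..<t1} t * G2 t \<partial>lborel)"
    unfolding L1_t_def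
    by (rule nn_integral_mono_AE) (use eq le in \<open>eventually_elim, auto simp: indicator_def\<close>)
  also have "\<dots> = L1_t t1 F1 + L1_t t1 F2" unfolding e1 e2 by (rule nn_integral_add) auto
  also have "\<dots> < \<infinity>" using fin by simp
  finally show ?thesis .
qed

lemma supn_L1_majorant:
  fixes g :: "real \<Rightarrow> 'z::{metric_space, second_countable_topology} \<Rightarrow> 'v::{real_normed_vector, second_countable_topology}"
  assumes "(\<lambda>(t,z). g t z) \<in> borel_measurable borel"
    and cont: "AE t in lborel. t \<in> {0<..<t1} \<longrightarrow> continuous_on S (g t)"
    and fin: "L1_t t1 (\<lambda>t. supn S (g t)) < \<infinity>"
  obtains D where "AE t in lborel. t \<in> {0<..<t1} \<longrightarrow> D t = enn2real (supn S (g t))"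
    and "\<And>t. 0 \<le> D t"
    and "\<And>q t0. 0 \<le> q \<Longrightarrow> t0 < t1 \<Longrightarrow> set_integrable lborel {q..t0} D"
    and "\<And>q t0. 0 \<le> q \<Longrightarrow> t0 < t1 \<Longrightarrow> (LINT t:{q..t0}|lborel. D t) \<le> enn2real (L1_t t1 (\<lambda>t. supn S (g t)))"
proof -
  obtain G where G: "G \<in> borel_measurable borel" "\<And>t. continuous_on S (g t) \<Longrightarrow> supn S (g t) = G t"
    using borel_measurable_supn_representative[OF assms(1)] by blast
  have eq: "AE t in lborel. t \<in> {0<..<t1} \<longrightarrow> supn S (g t) = G t"
    using cont by eventually_elim (auto intro: G(2))
  show ?thesis
  proof
    show "AE t in lborel. t \<in> {0<..<t1} \<longrightarrow> enn2real (G t) = enn2real (supn S (g t))"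
      using eq by eventually_elim auto
  qed (use L1_t_finite_set_integral[OF G(1) eq fin] in auto)
qed

lemma lipc_L1_majorant:
  fixes g :: "real \<Rightarrow> 'z::{metric_space, second_countable_topology} \<Rightarrow> 'v::{metric_space, second_countable_topology}"
  assumes "(\<lambda>(t,z). g t z) \<in> borel_measurable borel"
    and cont: "AE t in lborel. t \<in> {0<..<t1} \<longrightarrow> continuous_on S (g t)"
    and fin: "L1_t t1 (\<lambda>t. lipc S (g t)) < \<infinity>"
  obtains D where "AE t in lborel. t \<in> {0<..<t1} \<longrightarrow> D t = enn2real (lipc S (g t))"
    and "\<And>t. 0 \<le> D t"
    and "\<And>q t0. 0 \<le> q \<Longrightarrow> t0 < t1 \<Longrightarrow> set_integrable lborel {q..t0} D"
    and "\<And>q t0. 0 \<le> q \<Longrightarrow> t0 < t1 \<Longrightarrow> (LINT t:{q..t0}|lborel. D t) \<le> enn2real (L1_t t1 (\<lambda>t. lipc S (g t)))"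
proof -
  obtain G where G: "G \<in> borel_measurable borel" "\<And>t. continuous_on S (g t) \<Longrightarrow> lipc S (g t) = G t"
    using borel_measurable_lipc_representative[OF assms(1)] by blast
  have eq: "AE t in lborel. t \<in> {0<..<t1} \<longrightarrow> lipc S (g t) = G t"
    using cont by eventually_elim (auto intro: G(2))
  show ?thesis
  proof
    show "AE t in lborel. t \<in> {0<..<t1} \<longrightarrow> enn2real (G t) = enn2real (lipc S (g t))"
      using eq by eventually_elim auto
  qed (use L1_t_finite_set_integral[OF G(1) eq fin] in auto)
qed

lemma open_Gset: "open (Gset dd)"
proof -
  have "Gset dd = {x. 0 < x $ dd} \<inter> {x. x $ dd < 1}" by (auto simp: Gset_def)
  moreover have "open {x::real^'a. 0 < x $ dd}" "open {x::real^'a. x $ dd < 1}"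
    by (intro open_Collect_less continuous_intros)+
  ultimately show ?thesis by auto
qed

lemma Gset_subset_Gbar: "Gset dd \<subseteq> Gbar dd"
  unfolding Gbar_def by (rule closure_subset)

lemma Gbar_nth_bounds: "x \<in> Gbar dd \<Longrightarrow> 0 \<le> x $ dd \<and> x $ dd \<le> 1"
proof -
  have "closed {x::real^'a. 0 \<le> x $ dd \<and> x $ dd \<le> 1}"
    by (intro closed_Collect_conj closed_Collect_le continuous_intros)
  moreover have "Gset dd \<subseteq> {x. 0 \<le> x $ dd \<and> x $ dd \<le> 1}" by (auto simp: Gset_def)
  ultimately have "Gbar dd \<subseteq> {x. 0 \<le> x $ dd \<and> x $ dd \<le> 1}"
    unfolding Gbar_def by (rule closure_minimal[rotated])
  then show "x \<in> Gbar dd \<Longrightarrow> 0 \<le> x $ dd \<and> x $ dd \<le> 1" by auto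
qed

lemma Dom_mono: "A \<le> B \<Longrightarrow> Dom dd A \<subseteq> Dom dd B"
  by (auto simp: Dom_def cube_def intro: order_trans)

lemma in_cube_if_norm_le: "norm (y::real^'p::finite) \<le> A \<Longrightarrow> y \<in> cube A"
  unfolding cube_def using component_le_norm_cart order_trans by blast

lemma AE_lborel_pairD:
  fixes P :: "real \<times> 'b::euclidean_space \<Rightarrow> bool"
  assumes "AE q in lborel. P q"
  shows "AE t in lborel. AE x in lborel. P (t, x)"
proof -
  have "pair_sigma_finite lborel lborel" by unfold_locales
  then show ?thesis using assms unfolding lborel_prod[symmetric] by (rule pair_sigma_finite.AE_pair)
qed

lemma AE_lborel_pairI:
  fixes P :: "real \<times> 'b::euclidean_space \<Rightarrow> bool"
  assumes "{q. P q} \<in> sets borel" "AE t in lborel. AE x in lborel. P (t, x)"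
  shows "AE q in lborel. P q"
proof -
  have ps: "pair_sigma_finite lborel lborel" by unfold_locales
  have "{q \<in> space (lborel \<Otimes>\<^sub>M lborel). P q} \<in> sets (lborel \<Otimes>\<^sub>M lborel)"
    using assms(1) unfolding lborel_prod sets_lborel by (simp add: space_pair_measure)
  then have "AE q in lborel \<Otimes>\<^sub>M lborel. P q"
    using assms(2) by (rule pair_sigma_finite.AE_pair_measure[OF ps])
  then show ?thesis unfolding lborel_prod .
qed

text \<open>For continuous sections the essential bound \<open>Linf_S\<close> becomes a pointwise bound on the
closed domain, because a nonempty open subset of \<open>G\<close> has positive measure.\<close>

lemma AE_norm_le_Linf_S:
  fixes k :: "real \<Rightarrow> real^'d::finite \<Rightarrow> real^'p::finite"
  assumes fin: "Linf_S t1 dd k < \<infinity>"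
    and cont: "AE t in lborel. t \<in> {0<..<t1} \<longrightarrow> continuous_on (Gbar dd) (k t)"
  shows "AE t in lborel. t \<in> {0<..<t1} \<longrightarrow> (\<forall>x\<in>Gbar dd. norm (k t x) \<le> enn2real (Linf_S t1 dd k))"
proof -
  define c where "c = enn2real (Linf_S t1 dd k)"
  have "AE q in lborel. q \<in> {0<..<t1} \<times> Gset dd \<longrightarrow> ennreal (norm (k (fst q) (snd q))) \<le> ennreal c"
    using AE_le_Inf_AE_bounds fin unfolding Linf_S_def c_def by (simp add: less_top)
  then have "AE q in lborel. q \<in> {0<..<t1} \<times> Gset dd \<longrightarrow> norm (k (fst q) (snd q)) \<le> c"
    by eventually_elim (simp add: c_def)
  then have "AE t in lborel. AE x in lborel. (t, x) \<in> {0<..<t1} \<times> Gset dd \<longrightarrow> norm (k t x) \<le> c"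
    by (auto dest!: AE_lborel_pairD elim!: AE_mp)
  with cont show ?thesis
  proof eventually_elim
    case (elim t)
    show ?case
    proof
      assume t: "t \<in> {0<..<t1}"
      then have ct: "continuous_on (Gbar dd) (k t)" using elim by auto
      have ae: "AE x in lborel. x \<in> Gset dd \<longrightarrow> norm (k t x) \<le> c"
        using elim(2) by eventually_elim (use t in auto)
      have inG: "norm (k t x) \<le> c" if x: "x \<in> Gset dd" for x
      proof (rule ccontr)
        assume "\<not> norm (k t x) \<le> c"
        define U where "U = Gset dd \<inter> k t -` {v. c < norm v}"
        have "open U" unfolding U_def
          by (intro continuous_open_preimage continuous_on_subset[OF ct Gset_subset_Gbar] open_Gset
              open_Collect_less continuous_intros)
        moreover have "AE y \<in> U in lebesgue. y \<in> {}"
          using ae by (intro AE_completion) (auto simp: U_def elim!: AE_mp)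
        moreover have "x \<in> U" using x \<open>\<not> norm (k t x) \<le> c\<close> by (auto simp: U_def)
        ultimately show False using mem_closed_if_AE_lebesgue_open[of U "{}" x] by auto
      qed
      have "k t ` closure (Gset dd) \<subseteq> cball 0 c"
        by (rule image_closure_subset) (use ct inG in \<open>auto simp: Gbar_def\<close>)
      then show "\<forall>x\<in>Gbar dd. norm (k t x) \<le> enn2real (Linf_S t1 dd k)"
        by (auto simp: Gbar_def c_def)
    qed
  qed
qed

lemma Linf_S_le:
  fixes k :: "real \<Rightarrow> real^'d::finite \<Rightarrow> real^'p::finite"
  assumes meas: "(\<lambda>(t,x). k t x) \<in> borel_measurable borel"
    and bnd: "AE t in lborel. t \<in> {0<..<t1} \<longrightarrow> (\<forall>x\<in>Gset dd. norm (k t x) \<le> c)"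
  shows "Linf_S t1 dd k \<le> ennreal c"
  unfolding Linf_S_def
proof (rule Inf_lower, safe)
  define A where "A = {0<..<t1} \<times> Gset dd"
  have mA: "A \<in> sets borel" unfolding A_def by (intro borel_open open_Times open_Gset) auto
  have [measurable]: "(\<lambda>q. k (fst q) (snd q)) \<in> borel_measurable borel"
    using meas by (simp add: case_prod_beta')
  have mg: "(\<lambda>q. norm (k (fst q) (snd q))) \<in> borel_measurable borel" by measurable
  have eq: "{q. q \<in> A \<longrightarrow> norm (k (fst q) (snd q)) \<le> c} = (UNIV - A) \<union> ((\<lambda>q. norm (k (fst q) (snd q))) -` {..c})"
    by auto
  have ms: "{q. q \<in> A \<longrightarrow> norm (k (fst q) (snd q)) \<le> c} \<in> sets borel"
    unfolding eq using mA measurable_sets_borel[OF mg, of "{..c}"] by auto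
  have "AE q in lborel. q \<in> A \<longrightarrow> norm (k (fst q) (snd q)) \<le> c"
    by (rule AE_lborel_pairI[OF ms]) (use bnd in \<open>eventually_elim, auto simp: A_def\<close>)
  then show "AE q in lborel. q \<in> {0<..<t1} \<times> Gset dd \<longrightarrow> ennreal (norm (k (fst q) (snd q))) \<le> ennreal c"
    by eventually_elim (auto simp: A_def intro: ennreal_leI)
qed

locale LinfW1inf_coeff =
  fixes t1 :: real and dd :: "'d::finite" and h :: "real \<Rightarrow> real^'d \<Rightarrow> real^'p::finite"
  assumes LinfW1inf: "LinfW1inf t1 dd h"
begin

lemma measurable: "(\<lambda>(t,x). h t x) \<in> borel_measurable borel"
  using LinfW1inf by (simp add: LinfW1inf_def)

lemma AE_bounded_Gset:
  obtains c where "AE t in lborel. t \<in> {0<..<t1} \<longrightarrow> (\<forall>x\<in>Gset dd. norm (h t x) \<le> c)"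
proof
  define E where "E = ess_sup_t t1 (\<lambda>t. supn (Gset dd) (h t) + lipc (Gset dd) (h t))"
  have fin: "E < \<infinity>" using LinfW1inf by (simp add: LinfW1inf_def E_def)
  show "AE t in lborel. t \<in> {0<..<t1} \<longrightarrow> (\<forall>x\<in>Gset dd. norm (h t x) \<le> enn2real E)"
    using AE_le_ess_sup_t[of t1 "\<lambda>t. supn (Gset dd) (h t) + lipc (Gset dd) (h t)"]
  proof eventually_elim
    case (elim t)
    show ?case
    proof (intro impI ballI)
      fix x assume t: "t \<in> {0<..<t1}" and x: "x \<in> Gset dd"
      have "ennreal (norm (h t x)) \<le> supn (Gset dd) (h t) + lipc (Gset dd) (h t)"
        using norm_le_supn[OF x, of "h t"] by (rule order_trans) simp
      also have "\<dots> \<le> E" using elim t by (simp add: E_def)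
      finally show "norm (h t x) \<le> enn2real E" using fin by (intro le_enn2real_if_ennreal_le) auto
    qed
  qed
qed

lemma Linf_S_finite: "Linf_S t1 dd h < \<infinity>"
proof -
  obtain c where "AE t in lborel. t \<in> {0<..<t1} \<longrightarrow> (\<forall>x\<in>Gset dd. norm (h t x) \<le> c)"
    by (rule AE_bounded_Gset)
  then have "Linf_S t1 dd h \<le> ennreal c" by (rule Linf_S_le[OF measurable])
  then show ?thesis by (rule le_less_trans) simp
qed

lemma DxLinf_S_finite: "DxLinf_S t1 dd h < \<infinity>"
proof -
  have "DxLinf_S t1 dd h \<le> ess_sup_t t1 (\<lambda>t. supn (Gset dd) (h t) + lipc (Gset dd) (h t))"
    unfolding DxLinf_S_def by (rule ess_sup_t_mono) simp
  also have "\<dots> < \<infinity>" using LinfW1inf by (simp add: LinfW1inf_def)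
  finally show ?thesis .
qed

lemma AE_continuous_on_Gbar: "AE t in lborel. t \<in> {0<..<t1} \<longrightarrow> continuous_on (Gbar dd) (h t)"
proof -
  have "AE t in lborel. t \<in> {0<..<t1} \<longrightarrow> supn (Gbar dd) (h t) < \<infinity> \<and> lipc (Gbar dd) (h t) < \<infinity>"
    using LinfW1inf by (simp add: LinfW1inf_def)
  then show ?thesis by eventually_elim (auto intro: continuous_on_if_lipc_finite)
qed

lemma AE_norm_le_Linf_S_Gbar:
  "AE t in lborel. t \<in> {0<..<t1} \<longrightarrow> (\<forall>x\<in>Gbar dd. norm (h t x) \<le> enn2real (Linf_S t1 dd h))"
  by (rule AE_norm_le_Linf_S[OF Linf_S_finite AE_continuous_on_Gbar])

lemma AE_lipschitz_on_Gbar: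
  "AE t in lborel. t \<in> {0<..<t1} \<longrightarrow> (enn2real (DxLinf_S t1 dd h))-lipschitz_on (Gbar dd) (h t)"
  using AE_le_ess_sup_t[of t1 "\<lambda>t. lipc (Gset dd) (h t)"] AE_continuous_on_Gbar
proof eventually_elim
  case (elim t)
  show ?case
  proof
    assume t: "t \<in> {0<..<t1}"
    have le: "lipc (Gset dd) (h t) \<le> DxLinf_S t1 dd h" using elim t by (simp add: DxLinf_S_def)
    have fin: "lipc (Gset dd) (h t) < \<infinity>" by (rule le_less_trans[OF le DxLinf_S_finite])
    have "(enn2real (DxLinf_S t1 dd h))-lipschitz_on (Gset dd) (h t)"
      by (rule lipschitz_on_le[OF lipschitz_on_lipc[OF fin]])
         (use le DxLinf_S_finite in \<open>auto intro: enn2real_mono\<close>)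
    then show "(enn2real (DxLinf_S t1 dd h))-lipschitz_on (Gbar dd) (h t)"
      unfolding Gbar_def by (rule lipschitz_on_closure) (use elim t in \<open>auto simp: Gbar_def\<close>)
  qed
qed

end

lemma AE_norm_le_Linf_S_diff:
  fixes h1 h2 :: "real \<Rightarrow> real^'d::finite \<Rightarrow> real^'p::finite"
  assumes "LinfW1inf t1 dd h1" "LinfW1inf t1 dd h2"
  shows "AE t in lborel. t \<in> {0<..<t1} \<longrightarrow>
           (\<forall>x\<in>Gbar dd. norm (h2 t x - h1 t x) \<le> enn2real (Linf_S t1 dd (\<lambda>t x. h2 t x - h1 t x)))"
proof -
  interpret H1: LinfW1inf_coeff t1 dd h1 by unfold_locales fact
  interpret H2: LinfW1inf_coeff t1 dd h2 by unfold_locales fact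
  have [measurable]: "(\<lambda>q. h1 (fst q) (snd q)) \<in> borel_measurable borel"
      "(\<lambda>q. h2 (fst q) (snd q)) \<in> borel_measurable borel"
    using H1.measurable H2.measurable by (simp_all add: case_prod_beta')
  have m: "(\<lambda>(t,x). h2 t x - h1 t x) \<in> borel_measurable borel"
    unfolding case_prod_beta' by measurable
  obtain c1 where "AE t in lborel. t \<in> {0<..<t1} \<longrightarrow> (\<forall>x\<in>Gset dd. norm (h1 t x) \<le> c1)"
    by (rule H1.AE_bounded_Gset)
  moreover obtain c2 where "AE t in lborel. t \<in> {0<..<t1} \<longrightarrow> (\<forall>x\<in>Gset dd. norm (h2 t x) \<le> c2)"
    by (rule H2.AE_bounded_Gset)
  ultimately have "AE t in lborel. t \<in> {0<..<t1} \<longrightarrow> (\<forall>x\<in>Gset dd. norm (h2 t x - h1 t x) \<le> c2 + c1)"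
    by eventually_elim (auto intro: norm_triangle_le_diff add_mono)
  then have "Linf_S t1 dd (\<lambda>t x. h2 t x - h1 t x) \<le> ennreal (c2 + c1)"
    by (rule Linf_S_le[OF m])
  then have fin: "Linf_S t1 dd (\<lambda>t x. h2 t x - h1 t x) < \<infinity>"
    by (rule le_less_trans) simp
  have "AE t in lborel. t \<in> {0<..<t1} \<longrightarrow> continuous_on (Gbar dd) (\<lambda>x. h2 t x - h1 t x)"
    using H1.AE_continuous_on_Gbar H2.AE_continuous_on_Gbar
    by eventually_elim (auto intro: continuous_on_diff)
  from AE_norm_le_Linf_S[OF fin this] show ?thesis .
qed

locale L1W1inf_drift =
  fixes t1 :: real and dd :: "'d::finite" and b :: "real \<Rightarrow> real^'d \<Rightarrow> real^'p::finite \<Rightarrow> real^'d"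
  assumes L1W1inf: "L1W1inf_loc t1 dd b"
begin

lemma measurable: "(\<lambda>(t,z). bxy b t z) \<in> borel_measurable borel"
proof -
  have "(\<lambda>(t,z). bxy b t z) = (\<lambda>(t,x,y). b t x y)" by (auto simp: bxy_def fun_eq_iff)
  then show ?thesis using L1W1inf by (simp add: L1W1inf_loc_def)
qed

lemma AE_regular:
  assumes "0 \<le> A"
  shows "AE t in lborel. t \<in> {0<..<t1} \<longrightarrow> supn (Dom dd A) (bxy b t) < \<infinity> \<and>
            lipc (Dom dd A) (bxy b t) < \<infinity> \<and> continuous_on (Dom dd A) (bxy b t)"
proof -
  have sub: "Dom dd A \<subseteq> Dom dd (A+1)" by (rule Dom_mono) simp
  have "AE t in lborel. t \<in> {0<..<t1} \<longrightarrow>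
          supn (Dom dd (A+1)) (bxy b t) < \<infinity> \<and> lipc (Dom dd (A+1)) (bxy b t) < \<infinity>"
    using L1W1inf assms by (simp add: L1W1inf_loc_def)
  then show ?thesis
    by eventually_elim (meson continuous_on_if_lipc_finite le_less_trans lipc_mono supn_mono sub)
qed

lemma L1_t_finite:
  assumes "0 \<le> A"
  shows "L1_t t1 (\<lambda>t. supn (Dom dd A) (bxy b t)) < \<infinity>" "L1_t t1 (\<lambda>t. lipc (Dom dd A) (bxy b t)) < \<infinity>"
proof -
  have sub: "Dom dd A \<subseteq> Dom dd (A+1)" by (rule Dom_mono) simp
  define F where "F t = supn (Dom dd (A+1)) (bxy b t) + lipc (Dom dd (A+1)) (bxy b t)" for t
  have "0 < A + 1" using assms by simp
  then have fin: "L1_t t1 F < \<infinity>"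
    using L1W1inf unfolding L1W1inf_loc_def F_def by blast
  have "L1_t t1 G < \<infinity>" if "\<And>t. G t \<le> F t" for G
    using fin unfolding L1_t_def
    by (rule le_less_trans[rotated], intro nn_integral_mono mult_left_mono that) simp
  moreover have "supn (Dom dd A) (bxy b t) \<le> F t" for t
    unfolding F_def using supn_mono[OF sub] by (rule order_trans) simp
  moreover have "lipc (Dom dd A) (bxy b t) \<le> F t" for t
    unfolding F_def using lipc_mono[OF sub] by (rule order_trans) simp
  ultimately show "L1_t t1 (\<lambda>t. supn (Dom dd A) (bxy b t)) < \<infinity>" "L1_t t1 (\<lambda>t. lipc (Dom dd A) (bxy b t)) < \<infinity>"
    by auto
qed

text \<open>The sign condition, assumed for a.e. \<open>t\<close> separately at each \<open>x \<in> G\<close>, holds for a.e. \<open>t\<close> on all of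
\<open>closure G\<close> at once: take a countable dense subset and use continuity in \<open>x\<close>.\<close>

lemma AE_bd_neg_Gbar:
  assumes indep: "bd_indep_y dd b" and neg: "bd_neg t1 dd B b"
  shows "AE t in lborel. t \<in> {0<..<t1} \<longrightarrow> (\<forall>x\<in>Gbar dd. \<forall>y. b t x y $ dd \<le> - B)"
proof -
  obtain D where D: "countable D" "D \<subseteq> Gset dd" "Gset dd \<subseteq> closure D" by (rule separable)
  have cD: "closure D = Gbar dd"
    using closure_mono[OF D(2)] closure_mono[OF D(3)] by (auto simp: Gbar_def)
  have "AE t in lborel. \<forall>x\<in>D. t \<in> {0<..<t1} \<longrightarrow> bdc dd b t x \<le> - B"
    using neg D by (subst AE_ball_countable) (auto simp: bd_neg_def)
  moreover have "AE t in lborel. t \<in> {0<..<t1} \<longrightarrow> continuous_on (Dom dd 1) (bxy b t)"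
    using AE_regular[OF zero_le_one] by eventually_elim auto
  ultimately show ?thesis
  proof eventually_elim
    case (elim t)
    show ?case
    proof (intro impI ballI allI)
      fix x y assume t: "t \<in> {0<..<t1}" and x: "x \<in> Gbar dd"
      have "continuous_on (Gbar dd) (\<lambda>x. bxy b t (x, 0))"
        by (rule continuous_on_compose2[of "Dom dd 1"]) 
           (use elim t in \<open>auto intro!: continuous_intros simp: Dom_def cube_def\<close>)
      then have "continuous_on (closure D) (\<lambda>x. bxy b t (x, 0) $ dd)"
        unfolding cD by (intro continuous_intros)
      moreover have "(\<lambda>x. bxy b t (x, 0) $ dd) ` D \<subseteq> {..-B}"
        using elim t by (auto simp: bdc_def bxy_def)
      ultimately have "(\<lambda>x. bxy b t (x, 0) $ dd) ` closure D \<subseteq> {..-B}"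
        by (intro image_closure_subset) auto
      then have "b t x 0 $ dd \<le> - B" using x cD by (auto simp: bxy_def)
      then show "b t x y $ dd \<le> - B" using indep by (simp add: bd_indep_y_def) metis
    qed
  qed
qed

end

lemma borel_measurable_drift_along:
  fixes b :: "real \<Rightarrow> real^'d::finite \<Rightarrow> real^'p::finite \<Rightarrow> real^'d" and h :: "real \<Rightarrow> real^'d \<Rightarrow> real^'p"
  assumes b: "(\<lambda>(t,x,y). b t x y) \<in> borel_measurable borel" and h: "(\<lambda>(t,x). h t x) \<in> borel_measurable borel"
    and q: "continuous_on UNIV q"
  shows "(\<lambda>s. b s (q s) (h s (q s))) \<in> borel_measurable borel"
proof -
  have qm: "q \<in> borel_measurable borel" by (rule borel_measurable_continuous_onI[OF q])
  have "(\<lambda>s. (s, q s)) \<in> borel_measurable borel"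
    by (intro borel_measurable_continuous_onI continuous_on_Pair continuous_on_id q)
  from measurable_compose[OF this h] have "(\<lambda>s. h s (q s)) \<in> borel_measurable borel" by simp
  from measurable_Pair[OF qm this] have "(\<lambda>s. (q s, h s (q s))) \<in> borel_measurable borel"
    unfolding borel_prod .
  from measurable_Pair[OF measurable_ident_sets[OF refl] this]
  have "(\<lambda>s. (s, (q s, h s (q s)))) \<in> borel_measurable borel" unfolding borel_prod by simp
  from measurable_compose[OF this b] show ?thesis by simp
qed

text \<open>Compare \<open>b2 (x2, h2 x2)\<close> with \<open>b1 (x2, h2 x2)\<close>, then move along \<open>b1\<close>; \<open>\<Lambda>\<close> absorbs the Lipschitz
constant of \<open>h1\<close>.\<close>

lemma drift_composition_estimate:
  fixes b1 b2 :: "real \<Rightarrow> real^'d::finite \<Rightarrow> real^'p::finite \<Rightarrow> real^'d"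
    and h1 h2 :: "real \<Rightarrow> real^'d \<Rightarrow> real^'p"
  assumes x: "x1 \<in> Gbar dd" "x2 \<in> Gbar dd"
    and hb: "norm (h1 r x1) \<le> R" "norm (h2 r x2) \<le> R"
    and hd: "norm (h2 r x2 - h1 r x2) \<le> eh"
    and hl: "dist (h1 r x2) (h1 r x1) \<le> Lh * dist x2 x1"
    and lf: "lipc (Dom dd R) (bxy b1 r) < \<infinity>"
    and sf: "supn (Dom dd R) (bxy (\<lambda>t x y. b2 t x y - b1 t x y) r) < \<infinity>"
    and Lam: "1 + Lh \<le> \<Lambda>"
  shows "norm (b2 r x2 (h2 r x2) - b1 r x1 (h1 r x1)) \<le>
     enn2real (supn (Dom dd R) (bxy (\<lambda>t x y. b2 t x y - b1 t x y) r))
     + enn2real (lipc (Dom dd R) (bxy b1 r)) * (eh + \<Lambda> * norm (x2 - x1))"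
proof -
  define L where "L = enn2real (lipc (Dom dd R) (bxy b1 r))"
  define S where "S = enn2real (supn (Dom dd R) (bxy (\<lambda>t x y. b2 t x y - b1 t x y) r))"
  have L0: "0 \<le> L" by (simp add: L_def)
  have z1: "(x1, h1 r x1) \<in> Dom dd R" using x hb by (auto simp: Dom_def intro: in_cube_if_norm_le)
  have z2: "(x2, h2 r x2) \<in> Dom dd R" using x hb by (auto simp: Dom_def intro: in_cube_if_norm_le)
  have d1: "norm (b2 r x2 (h2 r x2) - b1 r x2 (h2 r x2)) \<le> S"
    using norm_le_enn2real_supn[OF sf z2] by (simp add: S_def bxy_def)
  have "dist (b1 r x2 (h2 r x2)) (b1 r x1 (h1 r x1)) \<le> L * dist (x2, h2 r x2) (x1, h1 r x1)"
    using dist_le_lipc[OF lf z2 z1] by (simp add: L_def bxy_def)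
  also have "dist (x2, h2 r x2) (x1, h1 r x1) \<le> dist x2 x1 + dist (h2 r x2) (h1 r x1)"
    unfolding dist_Pair_Pair by (rule sqrt_sum_squares_le_sum) auto
  also have "dist (h2 r x2) (h1 r x1) \<le> dist (h2 r x2) (h1 r x2) + dist (h1 r x2) (h1 r x1)"
    by (rule dist_triangle)
  also have "dist (h2 r x2) (h1 r x2) \<le> eh" using hd by (simp add: dist_norm)
  also have "dist (h1 r x2) (h1 r x1) \<le> Lh * dist x2 x1" by (rule hl)
  finally have "norm (b1 r x2 (h2 r x2) - b1 r x1 (h1 r x1)) \<le> L * (dist x2 x1 + (eh + Lh * dist x2 x1))"
    using L0 by (simp add: dist_norm mult_left_mono)
  also have "\<dots> \<le> L * (eh + \<Lambda> * norm (x2 - x1))"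
    using L0 Lam by (intro mult_left_mono)
      (auto simp: dist_norm algebra_simps intro!: mult_right_mono[of "1 + Lh" \<Lambda>, simplified])
  finally have d2: "norm (b1 r x2 (h2 r x2) - b1 r x1 (h1 r x1)) \<le> L * (eh + \<Lambda> * norm (x2 - x1))" .
  have "norm (b2 r x2 (h2 r x2) - b1 r x1 (h1 r x1))
      \<le> norm (b2 r x2 (h2 r x2) - b1 r x2 (h2 r x2)) + norm (b1 r x2 (h2 r x2) - b1 r x1 (h1 r x1))"
    using norm_triangle_ineq[of "b2 r x2 (h2 r x2) - b1 r x2 (h2 r x2)" "b1 r x2 (h2 r x2) - b1 r x1 (h1 r x1)"]
    by simp
  then show ?thesis using d1 d2 by (simp add: L_def S_def)
qed

lemma set_integral_Icc_split:
  fixes f :: "real \<Rightarrow> 'b::{banach, second_countable_topology}"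
  assumes f: "set_integrable lborel {a..c} f" and "a \<le> b" "b \<le> c"
  shows "(LINT s:{a..c}|lborel. f s) = (LINT s:{a..b}|lborel. f s) + (LINT s:{b..c}|lborel. f s)"
proof -
  have eq: "{a..c} = {a..b} \<union> {b..c}" using assms(2,3) by auto
  have i1: "set_integrable lborel {a..b} f" using f by (rule set_integrable_subset) (use assms in auto)
  have i2: "set_integrable lborel {b..c} f" using f by (rule set_integrable_subset) (use assms in auto)
  have ae: "AE x in lborel. \<not> (x \<in> {a..b} \<and> x \<in> {b..c})"
    using AE_lborel_singleton[of b] by eventually_elim auto
  show ?thesis unfolding eq by (rule set_integral_Un_AE[OF ae _ _ i1 i2]) auto
qed

lemma set_integral_singleton [simp]:
  fixes f :: "real \<Rightarrow> 'b::{banach, second_countable_topology}"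
  shows "(LINT s:{a}|lborel. f s) = 0"
proof -
  have "AE x in lborel. indicator {a} x *\<^sub>R f x = 0"
    using AE_lborel_singleton[of a] by eventually_elim auto
  then show ?thesis unfolding set_lebesgue_integral_def by (rule integral_eq_zero_AE)
qed

lemma set_integral_nonneg_real:
  fixes f :: "real \<Rightarrow> real"
  assumes "\<And>x. x \<in> A \<Longrightarrow> 0 \<le> f x"
  shows "0 \<le> (LINT s:A|lborel. f s)"
  unfolding set_lebesgue_integral_def
  by (rule integral_nonneg_AE) (use assms in \<open>auto simp: indicator_def\<close>)

lemma set_integral_Icc_tail_le:
  fixes f :: "real \<Rightarrow> real"
  assumes "set_integrable lborel {a..b} f" "\<And>x. 0 \<le> f x" "r \<in> {a..b}"
  shows "(LINT s:{r..b}|lborel. f s) \<le> (LINT s:{a..b}|lborel. f s)"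
  using set_integral_Icc_split[OF assms(1), of r] set_integral_nonneg_real[of "{a..r}" f] assms(2,3)
  by auto

lemma continuous_on_set_integral_Icc_lower:
  fixes f :: "real \<Rightarrow> 'b::euclidean_space"
  assumes f: "set_integrable lborel {a..b} f"
  shows "continuous_on {a..b} (\<lambda>x. LINT s:{x..b}|lborel. f s)"
proof -
  have "f integrable_on {a..b}" using set_borel_integral_eq_integral(1)[OF f] .
  then have c: "continuous_on {a..b} (\<lambda>x. integral {x..b} f)" by (rule indefinite_integral_continuous_1')
  have "(LINT s:{x..b}|lborel. f s) = integral {x..b} f" if "x \<in> {a..b}" for x
  proof -
    have "set_integrable lborel {x..b} f" using f by (rule set_integrable_subset) (use that in auto)
    then show ?thesis by (rule set_borel_integral_eq_integral(2))
  qed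
  then have "continuous_on {a..b} (\<lambda>x. LINT s:{x..b}|lborel. f s) \<longleftrightarrow>
      continuous_on {a..b} (\<lambda>x. integral {x..b} f)"
    by (intro continuous_on_cong) auto
  then show ?thesis using c by simp
qed

lemma set_integrable_mult_continuous:
  fixes l u :: "real \<Rightarrow> real"
  assumes l: "set_integrable lborel {a..b} l" and u: "continuous_on {a..b} u"
  shows "set_integrable lborel {a..b} (\<lambda>r. l r * u r)"
proof -
  obtain B where B: "\<And>r. r \<in> {a..b} \<Longrightarrow> norm (u r) \<le> B" "0 \<le> B"
  proof -
    have "compact (u ` {a..b})" by (intro compact_continuous_image u) auto
    then obtain B where "\<forall>x\<in>u ` {a..b}. norm x \<le> B" by (meson bounded_iff compact_imp_bounded)
    then show ?thesis by (intro that[of "max B 0"]) (auto simp: le_max_iff_disj)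
  qed
  have m1: "(\<lambda>x. indicator {a..b} x *\<^sub>R l x) \<in> borel_measurable lborel"
    using l unfolding set_integrable_def by (rule borel_measurable_integrable)
  have "(\<lambda>x. indicator {a..b} x *\<^sub>R u x) \<in> borel_measurable borel"
    by (intro borel_measurable_continuous_on_indicator u) auto
  then have m2: "(\<lambda>x. indicator {a..b} x *\<^sub>R u x) \<in> borel_measurable lborel"
    by (simp add: measurable_lborel1)
  have "(\<lambda>x. (indicator {a..b} x *\<^sub>R l x) * (indicator {a..b} x *\<^sub>R u x)) \<in> borel_measurable lborel"
    using m1 m2 by (rule borel_measurable_times)
  moreover have "(\<lambda>x. (indicator {a..b} x *\<^sub>R l x) * (indicator {a..b} x *\<^sub>R u x))
      = (\<lambda>x. indicator {a..b} x *\<^sub>R (l x * u x))"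
    by (auto simp: indicator_def)
  ultimately have m: "(\<lambda>x. indicator {a..b} x *\<^sub>R (l x * u x)) \<in> borel_measurable lborel" by simp
  have "integrable lborel (\<lambda>x. B * (indicator {a..b} x *\<^sub>R l x))"
    using l unfolding set_integrable_def by (rule integrable_mult_right)
  then show ?thesis unfolding set_integrable_def
  proof (rule Bochner_Integration.integrable_bound[OF _ m], intro AE_I2)
    fix x show "norm (indicator {a..b} x *\<^sub>R (l x * u x)) \<le> norm (B * (indicator {a..b} x *\<^sub>R l x))"
    proof (cases "x \<in> {a..b}")
      case True
      then have "\<bar>l x\<bar> * \<bar>u x\<bar> \<le> \<bar>l x\<bar> * B" using B(1)[of x] by (intro mult_left_mono) auto
      then show ?thesis using True B(2) by (simp add: abs_mult mult.commute)
    qed simp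
  qed
qed

lemma set_integrable_if_AE_norm_le:
  fixes f :: "real \<Rightarrow> 'b::{banach, second_countable_topology}"
  assumes m: "f \<in> borel_measurable borel" and g: "set_integrable lborel {a..b} g"
    and bnd: "AE s\<in>{a..b} in lborel. norm (f s) \<le> g s"
  shows "set_integrable lborel {a..b} f"
  unfolding set_integrable_def
proof (rule Bochner_Integration.integrable_bound)
  show "integrable lborel (\<lambda>x. indicator {a..b} x *\<^sub>R g x)" using g by (simp add: set_integrable_def)
  have "f \<in> borel_measurable lborel" using m by (simp add: measurable_lborel1)
  then show "(\<lambda>x. indicator {a..b} x *\<^sub>R f x) \<in> borel_measurable lborel"
    by (intro borel_measurable_scaleR borel_measurable_indicator) auto
  show "AE x in lborel. norm (indicator {a..b} x *\<^sub>R f x) \<le> norm (indicator {a..b} x *\<^sub>R g x)"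
    using bnd by eventually_elim (auto simp: indicator_def)
qed

lemma norm_set_integral_le_AE:
  fixes f :: "'a \<Rightarrow> 'b::{banach, second_countable_topology}"
  assumes "set_integrable M A f" "set_integrable M A g" "AE x\<in>A in M. norm (f x) \<le> g x"
  shows "norm (LINT x:A|M. f x) \<le> (LINT x:A|M. g x)"
  using set_integral_norm_bound[OF assms(1)] set_integral_mono_AE[OF set_integrable_norm[OF assms(1)] assms(2,3)]
  by linarith

lemma set_integral_Icc_const: "a \<le> b \<Longrightarrow> (LINT x:{a..b::real}|lborel. (c::real)) = (b - a) * c"
  by (subst set_integral_const) (auto simp: emeasure_lborel_Icc_eq measure_lborel_Icc)

lemma set_integrable_Icc_const: "set_integrable lborel {a..b::real} (\<lambda>_. c::real)"
  unfolding set_integrable_def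
  by (rule integrableI_bounded_set_indicator[where B="\<bar>c\<bar>"]) (auto simp: emeasure_lborel_Icc_eq)

lemma set_integral_vec_nth:
  fixes f :: "real \<Rightarrow> real^'n::finite"
  assumes "set_integrable lborel A f"
  shows "(LINT x:A|lborel. f x) $ i = (LINT x:A|lborel. f x $ i)"
    and "set_integrable lborel A (\<lambda>x. f x $ i)"
proof -
  have int: "integrable lborel (\<lambda>x. indicator A x *\<^sub>R f x)" using assms by (simp add: set_integrable_def)
  have eq: "(\<lambda>x. (indicator A x *\<^sub>R f x) \<bullet> axis i 1) = (\<lambda>x. indicator A x *\<^sub>R (f x $ i))"
    by (simp add: cart_eq_inner_axis)
  show "set_integrable lborel A (\<lambda>x. f x $ i)"
    using integrable_inner_left[OF int, of "axis i 1"] unfolding eq set_integrable_def .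
  show "(LINT x:A|lborel. f x) $ i = (LINT x:A|lborel. f x $ i)"
    unfolding set_lebesgue_integral_def cart_eq_inner_axis
    using integral_inner_left[OF int, of "axis i 1"] eq by simp
qed

lemma small_tail_integral:
  fixes k :: "real \<Rightarrow> real"
  assumes k: "set_integrable lborel {0..\<tau>} k" and "0 < \<tau>" "0 < \<epsilon>"
  obtains a where "0 \<le> a" "a < \<tau>" "(LINT s:{a..\<tau>}|lborel. k s) < \<epsilon>"
proof -
  obtain d where d: "0 < d" "\<And>r. r \<in> {0..\<tau>} \<Longrightarrow> dist r \<tau> < d \<Longrightarrow>
      dist (LINT s:{r..\<tau>}|lborel. k s) (LINT s:{\<tau>..\<tau>}|lborel. k s) < \<epsilon>"
    using continuous_on_set_integral_Icc_lower[OF k] assms(2,3) unfolding continuous_on_iff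
    by (metis atLeastAtMost_iff less_eq_real_def order_refl)
  define a where "a = max 0 (\<tau> - d / 2)"
  have a: "0 \<le> a" "a < \<tau>" "a \<in> {0..\<tau>}" "dist a \<tau> < d" using assms d(1) by (auto simp: a_def dist_real_def)
  show ?thesis
  proof (rule that[OF a(1,2)])
    show "(LINT s:{a..\<tau>}|lborel. k s) < \<epsilon>"
      using d(2)[OF a(3,4)] by (simp add: dist_real_def)
  qed
qed

section \<open>A backward Gronwall inequality\<close>

text \<open>With \<open>K r = \<integral>\<^sub>r\<^sup>t\<^sup>0 l\<close>, cutting \<open>[r, t0]\<close> where \<open>K\<close> crosses the multiples of \<open>\<eta>\<close> shows that the
majorant \<open>\<Phi>\<close> grows at most by the factor \<open>1 / (1 - \<Lambda> \<eta>)\<close> per step; letting \<open>\<eta> \<rightarrow> 0\<close> gives the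
exponential.\<close>

lemma gronwall_iteration:
  fixes \<Phi> K :: "real \<Rightarrow> real"
  assumes key: "\<And>r r'. T \<le> r \<Longrightarrow> r \<le> r' \<Longrightarrow> r' \<le> t0 \<Longrightarrow> \<Phi> r \<le> \<Phi> r' + \<Lambda> * \<Phi> r * (K r - K r')"
    and \<Phi>_ge: "\<And>r. T \<le> r \<Longrightarrow> a \<le> \<Phi> r" and \<Phi>_t0: "\<Phi> t0 = a" and a: "0 \<le> a"
    and K_cont: "continuous_on {T..t0} K" and K_t0: "K t0 = 0"
    and \<Lambda>: "0 \<le> \<Lambda>" and \<eta>: "0 \<le> \<eta>" "\<Lambda> * \<eta> \<le> 1"
  shows "T \<le> r \<Longrightarrow> r \<le> t0 \<Longrightarrow> K r \<le> real n * \<eta> \<Longrightarrow> \<Phi> r * (1 - \<Lambda> * \<eta>) ^ n \<le> a"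
proof (induction n arbitrary: r)
  case 0
  have "\<Phi> r \<le> \<Phi> t0 + \<Lambda> * \<Phi> r * (K r - K t0)" using 0 by (intro key) auto
  also have "\<dots> \<le> a"
    using 0 \<Lambda> \<Phi>_ge[of r] a by (simp add: \<Phi>_t0 K_t0 mult_nonneg_nonpos)
  finally show ?case by simp
next
  case (Suc n)
  have q: "0 \<le> 1 - \<Lambda> * \<eta>" "1 - \<Lambda> * \<eta> \<le> 1" using \<eta> \<Lambda> by auto
  have \<Phi>r: "0 \<le> \<Phi> r" using \<Phi>_ge[of r] Suc.prems a by auto
  show ?case
  proof (cases "K r \<le> real n * \<eta>")
    case True
    then have "\<Phi> r * (1 - \<Lambda> * \<eta>) ^ n \<le> a" using Suc by auto
    moreover have "\<Phi> r * (1 - \<Lambda> * \<eta>) ^ Suc n \<le> \<Phi> r * (1 - \<Lambda> * \<eta>) ^ n"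
      using q \<Phi>r by (intro mult_left_mono power_decreasing) auto
    ultimately show ?thesis by linarith
  next
    case False
    have "K t0 \<le> real n * \<eta>" "real n * \<eta> \<le> K r" using False K_t0 \<eta> by auto
    moreover have "continuous_on {r..t0} K"
      using K_cont by (rule continuous_on_subset) (use Suc.prems in auto)
    ultimately obtain r' where r': "r \<le> r'" "r' \<le> t0" "K r' = real n * \<eta>"
      using IVT2'[of K t0 "real n * \<eta>" r] Suc.prems by auto
    have "\<Phi> r \<le> \<Phi> r' + \<Lambda> * \<Phi> r * (K r - K r')" using Suc.prems r' by (intro key) auto
    also have "\<Lambda> * \<Phi> r * (K r - K r') \<le> \<Lambda> * \<Phi> r * \<eta>"
      using Suc.prems r' \<Lambda> \<Phi>r by (intro mult_left_mono) (auto simp: algebra_simps)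
    finally have "\<Phi> r * (1 - \<Lambda> * \<eta>) \<le> \<Phi> r'" by (simp add: algebra_simps)
    then have "\<Phi> r * (1 - \<Lambda> * \<eta>) * (1 - \<Lambda> * \<eta>) ^ n \<le> \<Phi> r' * (1 - \<Lambda> * \<eta>) ^ n"
      using q by (intro mult_right_mono zero_le_power) auto
    also have "\<dots> \<le> a" using Suc.IH[of r'] Suc.prems r' by auto
    finally show ?thesis by (simp add: mult.assoc)
  qed
qed

lemma gronwall_backward:
  fixes u l :: "real \<Rightarrow> real"
  assumes Tt0: "T \<le> t0"
    and l_int: "set_integrable lborel {T..t0} l" and l_nn: "\<And>s. 0 \<le> l s"
    and u_cont: "continuous_on {T..t0} u" and u_nn: "\<And>s. s \<in> {T..t0} \<Longrightarrow> 0 \<le> u s"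
    and ineq: "\<And>s. s \<in> {T..t0} \<Longrightarrow> u s \<le> a + \<Lambda> * (LINT r:{s..t0}|lborel. l r * u r)"
    and a: "0 \<le> a" and \<Lambda>: "0 \<le> \<Lambda>" and N: "(LINT r:{T..t0}|lborel. l r) \<le> N"
    and s: "s \<in> {T..t0}"
  shows "u s \<le> a * exp (\<Lambda> * N)"
proof -
  define K where "K r = (LINT q:{r..t0}|lborel. l q)" for r
  define \<Phi> where "\<Phi> r = a + \<Lambda> * (LINT q:{r..t0}|lborel. l q * u q)" for r
  have lu_int: "set_integrable lborel {T..t0} (\<lambda>r. l r * u r)"
    by (rule set_integrable_mult_continuous[OF l_int u_cont])
  have \<Phi>_split: "\<Phi> r = \<Phi> r' + \<Lambda> * (LINT q:{r..r'}|lborel. l q * u q)"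
    if "T \<le> r" "r \<le> r'" "r' \<le> t0" for r r'
  proof -
    have "set_integrable lborel {r..t0} (\<lambda>q. l q * u q)"
      using lu_int by (rule set_integrable_subset) (use that in auto)
    from set_integral_Icc_split[OF this, of r'] that show ?thesis by (simp add: \<Phi>_def algebra_simps)
  qed
  have I_nn: "0 \<le> (LINT q:{r..r'}|lborel. l q * u q)" if "T \<le> r" "r' \<le> t0" for r r'
    using that by (intro set_integral_nonneg_real mult_nonneg_nonneg l_nn u_nn) auto
  have \<Phi>_ge: "a \<le> \<Phi> r" if "T \<le> r" for r
    unfolding \<Phi>_def using I_nn[OF that order_refl] \<Lambda> by simp
  have \<Phi>_mono: "\<Phi> r' \<le> \<Phi> r" if "T \<le> r" "r \<le> r'" "r' \<le> t0" for r r'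
    using \<Phi>_split[OF that] I_nn[of r r'] that \<Lambda> by simp
  have u_\<Phi>: "u r \<le> \<Phi> r" if "r \<in> {T..t0}" for r
    using ineq[OF that] by (simp add: \<Phi>_def)
  have key: "\<Phi> r \<le> \<Phi> r' + \<Lambda> * \<Phi> r * (K r - K r')" if r: "T \<le> r" "r \<le> r'" "r' \<le> t0" for r r'
  proof -
    have l_int': "set_integrable lborel {r..r'} l" using l_int by (rule set_integrable_subset) (use r in auto)
    have "(LINT q:{r..r'}|lborel. l q * u q) \<le> (LINT q:{r..r'}|lborel. l q * \<Phi> r)"
    proof (rule set_integral_mono)
      show "set_integrable lborel {r..r'} (\<lambda>q. l q * u q)"
        using lu_int by (rule set_integrable_subset) (use r in auto)
      show "set_integrable lborel {r..r'} (\<lambda>q. l q * \<Phi> r)" by (rule set_integrable_mult_left[OF l_int'])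
      show "l q * u q \<le> l q * \<Phi> r" if "q \<in> {r..r'}" for q
        using u_\<Phi>[of q] \<Phi>_mono[of r q] that r by (intro mult_left_mono l_nn) auto
    qed
    also have "\<dots> = \<Phi> r * (K r - K r')"
    proof -
      have "set_integrable lborel {r..t0} l" using l_int by (rule set_integrable_subset) (use r in auto)
      from set_integral_Icc_split[OF this, of r'] r
      show ?thesis by (simp add: K_def set_integral_mult_left mult.commute)
    qed
    finally have "\<Lambda> * (LINT q:{r..r'}|lborel. l q * u q) \<le> \<Lambda> * (\<Phi> r * (K r - K r'))"
      using \<Lambda> by (rule mult_left_mono)
    then show ?thesis using \<Phi>_split[OF r] by (simp add: algebra_simps)
  qed
  have K_cont: "continuous_on {T..t0} K" unfolding K_def by (rule continuous_on_set_integral_Icc_lower[OF l_int])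
  have K_t0: "K t0 = 0" by (simp add: K_def)
  have \<Phi>_t0: "\<Phi> t0 = a" by (simp add: \<Phi>_def)
  have Ks: "K s \<le> N" using set_integral_Icc_tail_le[OF l_int l_nn s] N by (simp add: K_def)
  have N0: "0 \<le> N" using N set_integral_nonneg_real[of "{T..t0}" l] l_nn by fastforce
  obtain n0 :: nat where n0: "\<Lambda> * N \<le> real n0" using real_arch_simple by blast
  have "u s * (1 + (- (\<Lambda> * N)) / real n) ^ n \<le> a" if n: "n \<ge> Suc n0" for n
  proof -
    define \<eta> where "\<eta> = N / real n"
    have \<eta>: "0 \<le> \<eta>" "\<Lambda> * \<eta> \<le> 1" using N0 n n0 by (auto simp: \<eta>_def divide_le_eq)
    have "K s \<le> real n * \<eta>" using Ks n by (simp add: \<eta>_def)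
    then have "\<Phi> s * (1 - \<Lambda> * \<eta>) ^ n \<le> a"
      using gronwall_iteration[OF key \<Phi>_ge \<Phi>_t0 a K_cont K_t0 \<Lambda> \<eta>] s by auto
    moreover have "u s * (1 - \<Lambda> * \<eta>) ^ n \<le> \<Phi> s * (1 - \<Lambda> * \<eta>) ^ n"
      using u_\<Phi>[OF s] \<eta> by (intro mult_right_mono zero_le_power) auto
    ultimately show ?thesis by (simp add: \<eta>_def)
  qed
  moreover have "(\<lambda>n. u s * (1 + (- (\<Lambda> * N)) / real n) ^ n) \<longlonglongrightarrow> u s * exp (- (\<Lambda> * N))"
    by (intro tendsto_mult tendsto_const tendsto_exp_limit_sequentially)
  ultimately have "u s * exp (- (\<Lambda> * N)) \<le> a"
    by (intro LIMSEQ_le_const2) blast+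
  then have "u s * exp (- (\<Lambda> * N)) * exp (\<Lambda> * N) \<le> a * exp (\<Lambda> * N)"
    by (intro mult_right_mono) auto
  then show ?thesis by (simp add: exp_minus field_simps)
qed

lemma is_sol_mem: "is_sol dd b h t0 x0 tau X \<Longrightarrow> t \<in> {tau..t0} \<Longrightarrow> X t \<in> Gbar dd"
  unfolding is_sol_def by blast

lemma is_sol_integrable:
  "is_sol dd b h t0 x0 tau X \<Longrightarrow> t \<in> {tau..t0} \<Longrightarrow> set_integrable lborel {t..t0} (\<lambda>s. b s (X s) (h s (X s)))"
  unfolding is_sol_def by blast

lemma is_sol_eq:
  "is_sol dd b h t0 x0 tau X \<Longrightarrow> t \<in> {tau..t0} \<Longrightarrow> X t = x0 - (LINT s:{t..t0}|lborel. b s (X s) (h s (X s)))"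
  unfolding is_sol_def by blast

lemma is_sol_at_end: "is_sol dd b h t0 x0 tau X \<Longrightarrow> tau \<le> t0 \<Longrightarrow> X t0 = x0"
  using is_sol_eq[of dd b h t0 x0 tau X t0] by simp

lemma is_sol_increment:
  assumes sol: "is_sol dd b h t0 x0 tau X" and s: "tau \<le> s" "s \<le> s'" "s' \<le> t0"
  shows "X s = X s' - (LINT r:{s..s'}|lborel. b r (X r) (h r (X r)))"
    and "set_integrable lborel {s..s'} (\<lambda>r. b r (X r) (h r (X r)))"
proof -
  have i: "set_integrable lborel {s..t0} (\<lambda>r. b r (X r) (h r (X r)))"
    by (rule is_sol_integrable[OF sol]) (use s in auto)
  show "set_integrable lborel {s..s'} (\<lambda>r. b r (X r) (h r (X r)))"
    using i by (rule set_integrable_subset) (use s in auto)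
  have e1: "X s = x0 - ((LINT r:{s..s'}|lborel. b r (X r) (h r (X r))) + (LINT r:{s'..t0}|lborel. b r (X r) (h r (X r))))"
    using is_sol_eq[OF sol, of s] set_integral_Icc_split[OF i s(2,3)] s by auto
  have e2: "X s' = x0 - (LINT r:{s'..t0}|lborel. b r (X r) (h r (X r)))"
    using is_sol_eq[OF sol, of s'] s by auto
  show "X s = X s' - (LINT r:{s..s'}|lborel. b r (X r) (h r (X r)))"
    unfolding e1 e2 by (simp add: algebra_simps)
qed

lemma continuous_on_is_sol:
  assumes "is_sol dd b h t0 x0 tau X" "tau \<le> t0"
  shows "continuous_on {tau..t0} X"
proof -
  have int: "set_integrable lborel {tau..t0} (\<lambda>s. b s (X s) (h s (X s)))"
    using assms unfolding is_sol_def by auto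
  have "continuous_on {tau..t0} (\<lambda>t. x0 - (LINT s:{t..t0}|lborel. b s (X s) (h s (X s))))"
    by (intro continuous_intros continuous_on_set_integral_Icc_lower[OF int])
  moreover have "continuous_on {tau..t0} X \<longleftrightarrow>
      continuous_on {tau..t0} (\<lambda>t. x0 - (LINT s:{t..t0}|lborel. b s (X s) (h s (X s))))"
    using assms(1) unfolding is_sol_def by (intro continuous_on_cong) auto
  ultimately show ?thesis by simp
qed

lemma is_sol_nth_increase:
  assumes sol: "is_sol dd b h t0 x0 tau X"
    and neg: "AE t in lborel. t \<in> {0<..<t1} \<longrightarrow> (\<forall>x\<in>Gbar dd. \<forall>y. b t x y $ dd \<le> - B)"
    and s: "0 \<le> tau" "tau \<le> s" "s \<le> s'" "s' \<le> t0" and t0: "t0 < t1"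
  shows "X s' $ dd + B * (s' - s) \<le> X s $ dd"
proof -
  note incr = is_sol_increment[OF sol s(2,3,4)]
  have "(LINT r:{s..s'}|lborel. b r (X r) (h r (X r)) $ dd) \<le> (LINT r:{s..s'}|lborel. - B)"
  proof (rule set_integral_mono_AE)
    show "set_integrable lborel {s..s'} (\<lambda>r. b r (X r) (h r (X r)) $ dd)"
      by (rule set_integral_vec_nth(2)[OF incr(2)])
    show "AE r\<in>{s..s'} in lborel. b r (X r) (h r (X r)) $ dd \<le> - B"
      using neg AE_lborel_singleton[of 0]
      by eventually_elim (use s t0 is_sol_mem[OF sol] in auto)
  qed (rule set_integrable_Icc_const)
  also have "\<dots> = - B * (s' - s)" using s by (simp add: set_integral_Icc_const)
  finally show ?thesis
    using incr(1) set_integral_vec_nth(1)[OF incr(2), of dd] by simp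
qed

lemma is_sol_speed:
  assumes sol: "is_sol dd b h t0 x0 tau X"
    and bnd: "AE t in lborel. t \<in> {0<..<t1} \<longrightarrow> (\<forall>x\<in>Gbar dd. norm (b t x (h t x)) \<le> V)"
    and s: "0 \<le> tau" "tau \<le> s" "s \<le> s'" "s' \<le> t0" and t0: "t0 < t1"
  shows "norm (X s - X s') \<le> V * (s' - s)"
proof -
  note incr = is_sol_increment[OF sol s(2,3,4)]
  have "norm (X s - X s') = norm (LINT r:{s..s'}|lborel. b r (X r) (h r (X r)))" using incr(1) by simp
  also have "\<dots> \<le> (LINT r:{s..s'}|lborel. V)"
  proof (rule norm_set_integral_le_AE[OF incr(2) set_integrable_Icc_const])
    show "AE r\<in>{s..s'} in lborel. norm (b r (X r) (h r (X r))) \<le> V"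
      using bnd AE_lborel_singleton[of 0]
      by eventually_elim (use s t0 is_sol_mem[OF sol] in auto)
  qed
  also have "\<dots> = V * (s' - s)" using s by (simp add: set_integral_Icc_const mult.commute)
  finally show ?thesis .
qed

lemma AE_drift_norm_le_Linf_h:
  fixes b :: "real \<Rightarrow> real^'d::finite \<Rightarrow> real^'p::finite \<Rightarrow> real^'d"
  assumes hW: "LinfW1inf t1 dd h" and fin: "Linf_h t1 dd h h b < \<infinity>"
  shows "AE t in lborel. t \<in> {0<..<t1} \<longrightarrow> (\<forall>x\<in>Gbar dd. norm (b t x (h t x)) \<le> enn2real (Linf_h t1 dd h h b))"
proof -
  interpret H: LinfW1inf_coeff t1 dd h by unfold_locales (rule hW)
  have R: "Rad t1 dd h h = enn2real (Linf_S t1 dd h)" by (simp add: Rad_def)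
  have "AE t in lborel. t \<in> {0<..<t1} \<longrightarrow> supn (Dom dd (Rad t1 dd h h)) (bxy b t) \<le> Linf_h t1 dd h h b"
    unfolding Linf_h_def by (rule AE_le_ess_sup_t)
  with H.AE_norm_le_Linf_S_Gbar show ?thesis
  proof eventually_elim
    case (elim t)
    show ?case
    proof (intro impI ballI)
      fix x assume t: "t \<in> {0<..<t1}" and x: "x \<in> Gbar dd"
      have "(x, h t x) \<in> Dom dd (Rad t1 dd h h)" using elim t x unfolding R
        by (auto simp: Dom_def intro: in_cube_if_norm_le)
      then have "ennreal (norm (bxy b t (x, h t x))) \<le> supn (Dom dd (Rad t1 dd h h)) (bxy b t)"
        by (rule norm_le_supn)
      also have "\<dots> \<le> Linf_h t1 dd h h b" using elim t by auto
      finally show "norm (b t x (h t x)) \<le> enn2real (Linf_h t1 dd h h b)"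
        using fin by (intro le_enn2real_if_ennreal_le) (auto simp: bxy_def)
    qed
  qed
qed

lemma is_sol_extend:
  assumes sol: "is_sol dd b h t0 x0 \<tau> X" and "a \<le> \<tau>" "\<tau> \<le> t0"
    and Y_mem: "\<And>t. t \<in> {a..\<tau>} \<Longrightarrow> Y t \<in> Gbar dd"
    and Y_int: "\<And>t. t \<in> {a..\<tau>} \<Longrightarrow> set_integrable lborel {t..\<tau>} (\<lambda>s. b s (Y s) (h s (Y s)))"
    and Y_eq: "\<And>t. t \<in> {a..\<tau>} \<Longrightarrow> Y t = X \<tau> - (LINT s:{t..\<tau>}|lborel. b s (Y s) (h s (Y s)))"
  shows "is_sol dd b h t0 x0 a (\<lambda>t. if t < \<tau> then Y t else X t)"
proof -
  define W where "W t = (if t < \<tau> then Y t else X t)" for t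
  have WY: "W t = Y t" if "t \<in> {a..\<tau>}" for t
    using that Y_eq[of \<tau>] \<open>a \<le> \<tau>\<close> by (auto simp: W_def)
  have WX: "W t = X t" if "\<tau> \<le> t" for t using that by (simp add: W_def)
  have int_X: "set_integrable lborel {q..t0} (\<lambda>s. b s (W s) (h s (W s)))"
    if "\<tau> \<le> q" "q \<le> t0" for q
    using is_sol_integrable[OF sol, of q] that
      set_integrable_cong[of lborel lborel "{q..t0}" "{q..t0}" "\<lambda>s. b s (W s) (h s (W s))"]
    by (auto simp: WX)
  have eq_X: "(LINT s:{q..t0}|lborel. b s (W s) (h s (W s))) = (LINT s:{q..t0}|lborel. b s (X s) (h s (X s)))"
    if "\<tau> \<le> q" for q
    by (rule set_lebesgue_integral_cong) (use that in \<open>auto simp: WX\<close>)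
  have int_Y: "set_integrable lborel {q..\<tau>} (\<lambda>s. b s (W s) (h s (W s)))" if "q \<in> {a..\<tau>}" for q
    using Y_int[OF that] that
      set_integrable_cong[of lborel lborel "{q..\<tau>}" "{q..\<tau>}" "\<lambda>s. b s (W s) (h s (W s))"]
    by (auto simp: WY)
  have eq_Y: "(LINT s:{q..\<tau>}|lborel. b s (W s) (h s (W s))) = (LINT s:{q..\<tau>}|lborel. b s (Y s) (h s (Y s)))"
    if "q \<in> {a..\<tau>}" for q
    by (rule set_lebesgue_integral_cong) (use that in \<open>auto simp: WY\<close>)
  have "W t \<in> Gbar dd \<and> set_integrable lborel {t..t0} (\<lambda>s. b s (W s) (h s (W s))) \<and>
      W t = x0 - (LINT s:{t..t0}|lborel. b s (W s) (h s (W s)))" if t: "t \<in> {a..t0}" for t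
  proof (cases "\<tau> \<le> t")
    case True
    then show ?thesis using is_sol_mem[OF sol] is_sol_eq[OF sol] int_X eq_X t by (simp add: WX)
  next
    case False
    have int: "set_integrable lborel {t..t0} (\<lambda>s. b s (W s) (h s (W s)))"
    proof -
      have "{t..t0} = {t..\<tau>} \<union> {\<tau>..t0}" using False \<open>\<tau> \<le> t0\<close> by auto
      then show ?thesis using int_Y[of t] int_X[of \<tau>] False t \<open>\<tau> \<le> t0\<close> by (auto intro: set_integrable_Un)
    qed
    have "W t = X \<tau> - (LINT s:{t..\<tau>}|lborel. b s (W s) (h s (W s)))"
      using WY[of t] Y_eq[of t] eq_Y[of t] False t by auto
    also have "X \<tau> = x0 - (LINT s:{\<tau>..t0}|lborel. b s (W s) (h s (W s)))"
      using is_sol_eq[OF sol, of \<tau>] eq_X[of \<tau>] \<open>a \<le> \<tau>\<close> \<open>\<tau> \<le> t0\<close> by auto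
    finally have "W t = x0 - (LINT s:{t..t0}|lborel. b s (W s) (h s (W s)))"
      using set_integral_Icc_split[OF int, of \<tau>] False \<open>\<tau> \<le> t0\<close> by (simp add: algebra_simps)
    then show ?thesis using int WY[of t] Y_mem[of t] False t by auto
  qed
  then show ?thesis unfolding is_sol_def W_def by blast
qed

section \<open>Exit through the top face\<close>

lemma integral_equation_fixpoint:
  fixes G :: "(real \<Rightarrow>\<^sub>C 'a::euclidean_space) \<Rightarrow> real \<Rightarrow> 'a"
  assumes "a \<le> \<tau>"
    and G_int: "\<And>Y. set_integrable lborel {a..\<tau>} (G Y)"
    and sb: "set_integrable lborel {a..\<tau>} sb" "\<And>s. 0 \<le> sb s" "(LINT s:{a..\<tau>}|lborel. sb s) \<le> \<rho>"
    and lb: "set_integrable lborel {a..\<tau>} lb" "\<And>s. 0 \<le> lb s" "(LINT s:{a..\<tau>}|lborel. lb s) \<le> 1/2"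
    and bound: "\<And>Y. AE s in lborel. s \<in> {a..\<tau>} \<longrightarrow> norm (G Y s) \<le> sb s"
    and lip: "\<And>Y Z. AE s in lborel. s \<in> {a..\<tau>} \<longrightarrow> norm (G Y s - G Z s) \<le> lb s * dist Y Z"
  obtains Y where "\<And>t. t \<in> {a..\<tau>} \<Longrightarrow> apply_bcontfun Y t = z - (LINT s:{t..\<tau>}|lborel. G Y s)"
    and "\<And>t. t \<in> {a..\<tau>} \<Longrightarrow> apply_bcontfun Y t \<in> cball z \<rho>"
proof -
  have int_tail: "set_integrable lborel {r..\<tau>} f" if "set_integrable lborel {a..\<tau>} f" "r \<in> {a..\<tau>}"
    for r and f :: "real \<Rightarrow> 'b::{banach, second_countable_topology}"
    using that(1) by (rule set_integrable_subset) (use that(2) in auto)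
  have G_small: "norm (LINT s:{r..\<tau>}|lborel. G Y s) \<le> \<rho>" if r: "r \<in> {a..\<tau>}" for Y r
  proof -
    have "norm (LINT s:{r..\<tau>}|lborel. G Y s) \<le> (LINT s:{r..\<tau>}|lborel. sb s)"
      by (rule norm_set_integral_le_AE[OF int_tail[OF G_int r] int_tail[OF sb(1) r]])
        (use bound[of Y] r in \<open>eventually_elim, auto\<close>)
    also have "\<dots> \<le> \<rho>" using set_integral_Icc_tail_le[OF sb(1,2) r] sb(3) by linarith
    finally show ?thesis .
  qed
  have G_contract: "dist (LINT s:{r..\<tau>}|lborel. G Y s) (LINT s:{r..\<tau>}|lborel. G Z s) \<le> 1/2 * dist Y Z"
    if r: "r \<in> {a..\<tau>}" for Y Z r
  proof -
    note GY = int_tail[OF G_int r, of Y] and GZ = int_tail[OF G_int r, of Z]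
    have "dist (LINT s:{r..\<tau>}|lborel. G Y s) (LINT s:{r..\<tau>}|lborel. G Z s)
        = norm (LINT s:{r..\<tau>}|lborel. G Y s - G Z s)"
      by (simp add: dist_norm set_integral_diff(2)[OF GY GZ])
    also have "\<dots> \<le> (LINT s:{r..\<tau>}|lborel. lb s * dist Y Z)"
      by (rule norm_set_integral_le_AE[OF set_integral_diff(1)[OF GY GZ] set_integrable_mult_left[OF int_tail[OF lb(1) r]]])
        (use lip[of Y Z] r in \<open>eventually_elim, auto\<close>)
    also have "\<dots> = (LINT s:{r..\<tau>}|lborel. lb s) * dist Y Z" by (rule set_integral_mult_left)
    also have "\<dots> \<le> 1/2 * dist Y Z"
      using set_integral_Icc_tail_le[OF lb(1,2) r] lb(3) by (intro mult_right_mono) auto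
    finally show ?thesis .
  qed
  define c where "c t = max a (min t \<tau>)" for t
  have c: "c t \<in> {a..\<tau>}" "t \<in> {a..\<tau>} \<Longrightarrow> c t = t" for t using \<open>a \<le> \<tau>\<close> by (auto simp: c_def)
  define \<Phi>f where "\<Phi>f Y t = z - (LINT s:{c t..\<tau>}|lborel. G Y s)" for Y t
  have "\<Phi>f Y \<in> bcontfun" for Y
  proof -
    have "continuous_on UNIV c" unfolding c_def[abs_def] by (intro continuous_intros)
    then have "continuous_on UNIV (\<lambda>t. LINT s:{c t..\<tau>}|lborel. G Y s)"
      by (rule continuous_on_compose2[OF continuous_on_set_integral_Icc_lower[OF G_int]]) (use c in auto)
    then have "continuous_on UNIV (\<Phi>f Y)" unfolding \<Phi>f_def[abs_def] by (intro continuous_intros)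
    moreover have "range (\<Phi>f Y) \<subseteq> cball z \<rho>"
    proof (rule image_subsetI)
      fix t
      have "norm (LINT s:{c t..\<tau>}|lborel. G Y s) \<le> \<rho>" by (rule G_small[OF c(1)])
      then show "\<Phi>f Y t \<in> cball z \<rho>" by (simp add: \<Phi>f_def dist_norm)
    qed
    then have "bounded (range (\<Phi>f Y))" using bounded_cball bounded_subset by blast
    ultimately show ?thesis by (simp add: bcontfun_def)
  qed
  then have \<Phi>f_apply: "apply_bcontfun (Bcontfun (\<Phi>f Y)) t = \<Phi>f Y t" for Y t
    by (simp add: Bcontfun_inverse)
  have contraction: "dist (\<Phi>f Y t) (\<Phi>f Z t) \<le> 1/2 * dist Y Z" for Y Z t
  proof -
    have "dist (LINT s:{c t..\<tau>}|lborel. G Y s) (LINT s:{c t..\<tau>}|lborel. G Z s) \<le> 1/2 * dist Y Z"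
      by (rule G_contract[OF c(1)])
    then show ?thesis by (simp add: \<Phi>f_def dist_norm norm_minus_commute)
  qed
  define \<Phi> where "\<Phi> Y = Bcontfun (\<Phi>f Y)" for Y
  have "dist (\<Phi> Y) (\<Phi> Z) \<le> 1/2 * dist Y Z" for Y Z
    unfolding \<Phi>_def by (rule dist_bound) (unfold \<Phi>f_apply, rule contraction)
  then obtain Y where fixpoint: "\<Phi> Y = Y"
    using banach_fix_type[of "1/2" \<Phi>] by auto
  have Y: "apply_bcontfun Y t = z - (LINT s:{t..\<tau>}|lborel. G Y s)" if "t \<in> {a..\<tau>}" for t
  proof -
    have "apply_bcontfun Y t = \<Phi>f Y t" using \<Phi>f_apply[of Y t] fixpoint by (simp add: \<Phi>_def)
    then show ?thesis using c(2)[OF that] by (simp add: \<Phi>f_def)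
  qed
  show ?thesis
  proof (rule that[OF Y])
    show "apply_bcontfun Y t \<in> cball z \<rho>" if "t \<in> {a..\<tau>}" for t
      using Y[OF that] G_small[OF that, of Y] by (simp add: dist_norm)
  qed
qed

lemma local_solution_ball:
  fixes F :: "real \<Rightarrow> 'a::euclidean_space \<Rightarrow> 'a"
  assumes F_meas: "\<And>q. continuous_on UNIV q \<Longrightarrow> (\<lambda>s. F s (q s)) \<in> borel_measurable borel"
    and "0 < \<rho>" "a \<le> \<tau>"
    and sb: "set_integrable lborel {a..\<tau>} sb" "\<And>s. 0 \<le> sb s" "(LINT s:{a..\<tau>}|lborel. sb s) \<le> \<rho>"
    and lb: "set_integrable lborel {a..\<tau>} lb" "\<And>s. 0 \<le> lb s" "(LINT s:{a..\<tau>}|lborel. lb s) \<le> 1/2"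
    and bound: "AE s in lborel. s \<in> {a..\<tau>} \<longrightarrow> (\<forall>x\<in>cball z \<rho>. norm (F s x) \<le> sb s)"
    and lip: "AE s in lborel. s \<in> {a..\<tau>} \<longrightarrow>
                (\<forall>x\<in>cball z \<rho>. \<forall>x'\<in>cball z \<rho>. norm (F s x - F s x') \<le> lb s * norm (x - x'))"
  obtains Y where "\<forall>t\<in>{a..\<tau>}. Y t \<in> cball z \<rho> \<and> set_integrable lborel {t..\<tau>} (\<lambda>s. F s (Y s)) \<and>
      Y t = z - (LINT s:{t..\<tau>}|lborel. F s (Y s))"
proof -
  define P where "P = closest_point (cball z \<rho>)"
  have ne: "cball z \<rho> \<noteq> {}" using \<open>0 < \<rho>\<close> by simp
  have P_mem: "P v \<in> cball z \<rho>" for v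
    unfolding P_def by (rule closest_point_in_set[OF closed_cball ne])
  have P_lip: "dist (P v) (P w) \<le> dist v w" for v w
    unfolding P_def by (rule closest_point_lipschitz[OF convex_cball closed_cball ne])
  have P_id: "P v = v" if "v \<in> cball z \<rho>" for v
    unfolding P_def using that by (rule closest_point_self)
  have P_cont: "continuous_on UNIV P"
    unfolding P_def by (rule continuous_on_closest_point[OF convex_cball closed_cball ne])
  define G where "G Y s = F s (P (apply_bcontfun Y s))" for Y :: "real \<Rightarrow>\<^sub>C 'a" and s
  have G_bound: "AE s in lborel. s \<in> {a..\<tau>} \<longrightarrow> norm (G Y s) \<le> sb s" for Y
    using bound by eventually_elim (use P_mem in \<open>auto simp: G_def\<close>)
  have G_int: "set_integrable lborel {a..\<tau>} (G Y)" for Y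
  proof (rule set_integrable_if_AE_norm_le[OF _ sb(1)])
    have "continuous_on UNIV (\<lambda>s. P (apply_bcontfun Y s))"
      by (rule continuous_on_compose2[OF P_cont]) auto
    from F_meas[OF this] show "G Y \<in> borel_measurable borel" by (simp add: G_def[abs_def])
  qed (use G_bound[of Y] in \<open>eventually_elim, auto\<close>)
  have G_lip: "AE s in lborel. s \<in> {a..\<tau>} \<longrightarrow> norm (G Y s - G Z s) \<le> lb s * dist Y Z" for Y Z
    using lip
  proof eventually_elim
    case (elim s)
    show ?case
    proof
      assume s: "s \<in> {a..\<tau>}"
      have "norm (G Y s - G Z s) \<le> lb s * dist (P (apply_bcontfun Y s)) (P (apply_bcontfun Z s))"
        using elim s P_mem by (simp add: G_def dist_norm)
      also have "\<dots> \<le> lb s * dist Y Z"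
        by (intro mult_left_mono lb(2) order_trans[OF P_lip dist_bounded])
      finally show "norm (G Y s - G Z s) \<le> lb s * dist Y Z" .
    qed
  qed
  obtain Y where Y_eq: "\<And>t. t \<in> {a..\<tau>} \<Longrightarrow> apply_bcontfun Y t = z - (LINT s:{t..\<tau>}|lborel. G Y s)"
    and Y_mem: "\<And>t. t \<in> {a..\<tau>} \<Longrightarrow> apply_bcontfun Y t \<in> cball z \<rho>"
    by (rule integral_equation_fixpoint[OF \<open>a \<le> \<tau>\<close> G_int sb lb G_bound G_lip]) blast
  have GY: "G Y s = F s (apply_bcontfun Y s)" if "s \<in> {a..\<tau>}" for s
    using P_id[OF Y_mem[OF that]] by (simp add: G_def)
  have "apply_bcontfun Y t \<in> cball z \<rho> \<and> set_integrable lborel {t..\<tau>} (\<lambda>s. F s (apply_bcontfun Y s)) \<and>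
      apply_bcontfun Y t = z - (LINT s:{t..\<tau>}|lborel. F s (apply_bcontfun Y s))" if t: "t \<in> {a..\<tau>}" for t
  proof (intro conjI)
    show "apply_bcontfun Y t \<in> cball z \<rho>" by (rule Y_mem[OF t])
    have "set_integrable lborel {t..\<tau>} (G Y)" using G_int by (rule set_integrable_subset) (use t in auto)
    moreover have "set_integrable lborel {t..\<tau>} (G Y) = set_integrable lborel {t..\<tau>} (\<lambda>s. F s (apply_bcontfun Y s))"
      by (rule set_integrable_cong) (use t GY in auto)
    ultimately show "set_integrable lborel {t..\<tau>} (\<lambda>s. F s (apply_bcontfun Y s))" by simp
    have "(LINT s:{t..\<tau>}|lborel. G Y s) = (LINT s:{t..\<tau>}|lborel. F s (apply_bcontfun Y s))"
      by (rule set_lebesgue_integral_cong) (use t GY in auto)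
    then show "apply_bcontfun Y t = z - (LINT s:{t..\<tau>}|lborel. F s (apply_bcontfun Y s))"
      using Y_eq[OF t] by simp
  qed
  then show ?thesis by (intro that[of "apply_bcontfun Y"]) blast
qed

lemma drift_majorants:
  fixes b :: "real \<Rightarrow> real^'d::finite \<Rightarrow> real^'p::finite \<Rightarrow> real^'d" and h :: "real \<Rightarrow> real^'d \<Rightarrow> real^'p"
  assumes bW: "L1W1inf_loc t1 dd b" and hW: "LinfW1inf t1 dd h"
  obtains sb lb :: "real \<Rightarrow> real" where "\<And>s. 0 \<le> sb s" "\<And>s. 0 \<le> lb s"
    and "\<And>q t0. 0 \<le> q \<Longrightarrow> t0 < t1 \<Longrightarrow> set_integrable lborel {q..t0} sb"
    and "\<And>q t0. 0 \<le> q \<Longrightarrow> t0 < t1 \<Longrightarrow> set_integrable lborel {q..t0} lb"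
    and "AE s in lborel. s \<in> {0<..<t1} \<longrightarrow> (\<forall>x\<in>Gbar dd. norm (b s x (h s x)) \<le> sb s) \<and>
           (\<forall>x\<in>Gbar dd. \<forall>x'\<in>Gbar dd. norm (b s x (h s x) - b s x' (h s x')) \<le> lb s * norm (x - x'))"
proof -
  interpret B: L1W1inf_drift t1 dd b by unfold_locales (rule bW)
  interpret H: LinfW1inf_coeff t1 dd h by unfold_locales (rule hW)
  define A where "A = enn2real (Linf_S t1 dd h)"
  define \<Lambda> where "\<Lambda> = 1 + enn2real (DxLinf_S t1 dd h)"
  have A0: "0 \<le> A" by (simp add: A_def)
  note reg = B.AE_regular[OF A0]
  have cont: "AE t in lborel. t \<in> {0<..<t1} \<longrightarrow> continuous_on (Dom dd A) (bxy b t)"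
    using reg by eventually_elim auto
  obtain sb where sb: "AE t in lborel. t \<in> {0<..<t1} \<longrightarrow> sb t = enn2real (supn (Dom dd A) (bxy b t))"
    "\<And>t. 0 \<le> sb t" "\<And>q t0. 0 \<le> q \<Longrightarrow> t0 < t1 \<Longrightarrow> set_integrable lborel {q..t0} sb"
    by (rule supn_L1_majorant[OF B.measurable cont B.L1_t_finite(1)[OF A0]]) blast
  obtain lb where lb: "AE t in lborel. t \<in> {0<..<t1} \<longrightarrow> lb t = enn2real (lipc (Dom dd A) (bxy b t))"
    "\<And>t. 0 \<le> lb t" "\<And>q t0. 0 \<le> q \<Longrightarrow> t0 < t1 \<Longrightarrow> set_integrable lborel {q..t0} lb"
    by (rule lipc_L1_majorant[OF B.measurable cont B.L1_t_finite(2)[OF A0]]) blast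
  have zero: "supn S (bxy (\<lambda>t x y. b t x y - b t x y) s) = 0" for S s
    by (simp add: supn_def bxy_def case_prod_beta' bot_ennreal[symmetric])
  show ?thesis
  proof (rule that[of sb "\<lambda>s. \<Lambda> * lb s"])
    show "0 \<le> sb s" for s by (rule sb(2))
    show "set_integrable lborel {q..t0} sb" if "0 \<le> q" "t0 < t1" for q t0 using sb(3)[OF that] .
    show "0 \<le> \<Lambda> * lb s" for s using lb(2)[of s] by (simp add: \<Lambda>_def)
    show "set_integrable lborel {q..t0} (\<lambda>s. \<Lambda> * lb s)" if "0 \<le> q" "t0 < t1" for q t0
      using lb(3)[OF that] by (rule set_integrable_mult_right)
    show "AE s in lborel. s \<in> {0<..<t1} \<longrightarrow> (\<forall>x\<in>Gbar dd. norm (b s x (h s x)) \<le> sb s) \<and>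
        (\<forall>x\<in>Gbar dd. \<forall>x'\<in>Gbar dd. norm (b s x (h s x) - b s x' (h s x')) \<le> \<Lambda> * lb s * norm (x - x'))"
      using reg sb(1) lb(1) H.AE_norm_le_Linf_S_Gbar H.AE_lipschitz_on_Gbar
    proof eventually_elim
      case (elim s)
      show ?case
      proof (intro impI conjI ballI)
        assume s: "s \<in> {0<..<t1}"
        have supn_s: "supn (Dom dd A) (bxy b s) < \<infinity>" and lipc_s: "lipc (Dom dd A) (bxy b s) < \<infinity>"
          and sb_s: "sb s = enn2real (supn (Dom dd A) (bxy b s))"
          and lb_s: "lb s = enn2real (lipc (Dom dd A) (bxy b s))"
          and h_bnd: "\<forall>x\<in>Gbar dd. norm (h s x) \<le> A"
          and h_lip: "(enn2real (DxLinf_S t1 dd h))-lipschitz_on (Gbar dd) (h s)"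
          using elim s by (simp_all add: A_def)
        have inD: "(x, h s x) \<in> Dom dd A" if "x \<in> Gbar dd" for x
          using h_bnd that by (simp add: Dom_def in_cube_if_norm_le)
        fix x assume x: "x \<in> Gbar dd"
        show "norm (b s x (h s x)) \<le> sb s"
          using norm_le_enn2real_supn[OF supn_s inD[OF x]] sb_s by (simp add: bxy_def)
        fix x' assume x': "x' \<in> Gbar dd"
        have "norm (h s x') \<le> A" "norm (h s x) \<le> A" using h_bnd x x' by simp_all
        moreover have "norm (h s x - h s x) \<le> 0" by simp
        moreover have "dist (h s x) (h s x') \<le> enn2real (DxLinf_S t1 dd h) * dist x x'"
          by (rule lipschitz_onD[OF h_lip x x'])
        moreover note lipc_s
        moreover have "supn (Dom dd A) (bxy (\<lambda>t x y. b t x y - b t x y) s) < \<infinity>" by (simp only: zero) simp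
        moreover have "1 + enn2real (DxLinf_S t1 dd h) \<le> \<Lambda>" by (simp add: \<Lambda>_def)
        ultimately have "norm (b s x (h s x) - b s x' (h s x'))
            \<le> enn2real (supn (Dom dd A) (bxy (\<lambda>t x y. b t x y - b t x y) s))
              + enn2real (lipc (Dom dd A) (bxy b s)) * (0 + \<Lambda> * norm (x - x'))"
          by (rule drift_composition_estimate[OF x' x])
        then have "norm (b s x (h s x) - b s x' (h s x')) \<le> lb s * (0 + \<Lambda> * norm (x - x'))"
          unfolding zero lb_s by simp
        then show "norm (b s x (h s x) - b s x' (h s x')) \<le> \<Lambda> * lb s * norm (x - x')"
          by (simp add: algebra_simps)
      qed
    qed
  qed
qed

theorem max_sol_exit_top:
  fixes b :: "real \<Rightarrow> real^'d::finite \<Rightarrow> real^'p::finite \<Rightarrow> real^'d" and h :: "real \<Rightarrow> real^'d \<Rightarrow> real^'p"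
  assumes bW: "L1W1inf_loc t1 dd b" and hW: "LinfW1inf t1 dd h"
    and neg: "AE t in lborel. t \<in> {0<..<t1} \<longrightarrow> (\<forall>x\<in>Gbar dd. \<forall>y. b t x y $ dd \<le> - B)" and "0 \<le> B"
    and t0: "t0 < t1" and x0: "x0 \<in> Gset dd"
    and ms: "max_sol dd b h t0 x0 \<tau> X" and "0 < \<tau>"
  shows "X \<tau> $ dd = 1"
proof (rule ccontr)
  assume not_top: "X \<tau> $ dd \<noteq> 1"
  have "\<tau> \<le> t0" and sol: "is_sol dd b h t0 x0 \<tau> X"
    and maximal: "\<And>\<tau>' Y. 0 \<le> \<tau>' \<Longrightarrow> \<tau>' < \<tau> \<Longrightarrow> \<not> is_sol dd b h t0 x0 \<tau>' Y"
    using ms unfolding max_sol_def by auto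
  have "X t0 $ dd + B * (t0 - \<tau>) \<le> X \<tau> $ dd"
    by (rule is_sol_nth_increase[OF sol neg]) (use \<open>0 < \<tau>\<close> \<open>\<tau> \<le> t0\<close> t0 in auto)
  moreover have "0 \<le> B * (t0 - \<tau>)" using \<open>0 \<le> B\<close> \<open>\<tau> \<le> t0\<close> by simp
  moreover note is_sol_at_end[OF sol \<open>\<tau> \<le> t0\<close>] x0 Gbar_nth_bounds[OF is_sol_mem[OF sol, of \<tau>]] \<open>\<tau> \<le> t0\<close>
  ultimately have "X \<tau> \<in> Gset dd" using not_top by (auto simp: Gset_def)
  then obtain \<rho> where \<rho>: "0 < \<rho>" "cball (X \<tau>) \<rho> \<subseteq> Gset dd"
    using open_Gset open_contains_cball by blast
  obtain sb lb where sb0: "\<And>s. 0 \<le> sb s" and lb0: "\<And>s. 0 \<le> lb s"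
    and sb_int: "\<And>q t0. 0 \<le> q \<Longrightarrow> t0 < t1 \<Longrightarrow> set_integrable lborel {q..t0} sb"
    and lb_int: "\<And>q t0. 0 \<le> q \<Longrightarrow> t0 < t1 \<Longrightarrow> set_integrable lborel {q..t0} lb"
    and bounds: "AE s in lborel. s \<in> {0<..<t1} \<longrightarrow> (\<forall>x\<in>Gbar dd. norm (b s x (h s x)) \<le> sb s) \<and>
           (\<forall>x\<in>Gbar dd. \<forall>x'\<in>Gbar dd. norm (b s x (h s x) - b s x' (h s x')) \<le> lb s * norm (x - x'))"
    by (rule drift_majorants[OF bW hW]) blast
  have \<tau>t1: "\<tau> < t1" using \<open>\<tau> \<le> t0\<close> t0 by simp
  have int: "set_integrable lborel {0..\<tau>} (\<lambda>s. sb s + lb s)"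
    using sb_int[OF order_refl \<tau>t1] lb_int[OF order_refl \<tau>t1] by (rule set_integral_add(1))
  have "0 < min \<rho> (1/2)" using \<rho>(1) by simp
  then obtain a where a: "0 \<le> a" "a < \<tau>" and small: "(LINT s:{a..\<tau>}|lborel. sb s + lb s) < min \<rho> (1/2)"
    by (rule small_tail_integral[OF int \<open>0 < \<tau>\<close>])
  have sbA: "set_integrable lborel {a..\<tau>} sb" and lbA: "set_integrable lborel {a..\<tau>} lb"
    using sb_int lb_int a \<tau>t1 by auto
  have small_sb: "(LINT s:{a..\<tau>}|lborel. sb s) \<le> \<rho>" and small_lb: "(LINT s:{a..\<tau>}|lborel. lb s) \<le> 1/2"
    using small set_integral_add(2)[OF sbA lbA] set_integral_nonneg_real[of "{a..\<tau>}" sb]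
      set_integral_nonneg_real[of "{a..\<tau>}" lb] sb0 lb0 by auto
  define F where "F s x = b s x (h s x)" for s x
  have ball_Gbar: "cball (X \<tau>) \<rho> \<subseteq> Gbar dd" using \<rho>(2) Gset_subset_Gbar by blast
  have "AE s in lborel. s \<in> {a..\<tau>} \<longrightarrow> (\<forall>x\<in>Gbar dd. norm (F s x) \<le> sb s) \<and>
      (\<forall>x\<in>Gbar dd. \<forall>x'\<in>Gbar dd. norm (F s x - F s x') \<le> lb s * norm (x - x'))"
    using bounds AE_lborel_singleton[of 0] unfolding F_def by eventually_elim (use a \<tau>t1 in auto)
  then have bound_ball: "AE s in lborel. s \<in> {a..\<tau>} \<longrightarrow> (\<forall>x\<in>cball (X \<tau>) \<rho>. norm (F s x) \<le> sb s)"
    and lip_ball: "AE s in lborel. s \<in> {a..\<tau>} \<longrightarrow>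
      (\<forall>x\<in>cball (X \<tau>) \<rho>. \<forall>x'\<in>cball (X \<tau>) \<rho>. norm (F s x - F s x') \<le> lb s * norm (x - x'))"
    using ball_Gbar by (eventually_elim, blast)+
  have meas: "(\<lambda>s. F s (q s)) \<in> borel_measurable borel" if "continuous_on UNIV q" for q
    using borel_measurable_drift_along[OF _ LinfW1inf_coeff.measurable[OF LinfW1inf_coeff.intro[OF hW]] that] bW
    by (simp add: L1W1inf_loc_def F_def)
  obtain Y where Y: "\<forall>t\<in>{a..\<tau>}. Y t \<in> cball (X \<tau>) \<rho> \<and> set_integrable lborel {t..\<tau>} (\<lambda>s. F s (Y s)) \<and>
      Y t = X \<tau> - (LINT s:{t..\<tau>}|lborel. F s (Y s))"
    by (rule local_solution_ball[OF meas \<rho>(1) less_imp_le[OF a(2)] sbA sb0 small_sb lbA lb0 small_lb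
          bound_ball lip_ball])
  have Y_mem: "Y t \<in> Gbar dd" if "t \<in> {a..\<tau>}" for t using Y ball_Gbar that by blast
  have Y_int: "set_integrable lborel {t..\<tau>} (\<lambda>s. b s (Y s) (h s (Y s)))" if "t \<in> {a..\<tau>}" for t
    using Y that by (simp add: F_def)
  have Y_eq: "Y t = X \<tau> - (LINT s:{t..\<tau>}|lborel. b s (Y s) (h s (Y s)))" if "t \<in> {a..\<tau>}" for t
    using Y that by (simp add: F_def)
  have "is_sol dd b h t0 x0 a (\<lambda>t. if t < \<tau> then Y t else X t)"
    by (rule is_sol_extend[OF sol less_imp_le[OF a(2)] \<open>\<tau> \<le> t0\<close> Y_mem Y_int Y_eq])
  then show False using maximal[OF a] by blast
qed

section \<open>Stability of the characteristics\<close>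

lemma Linf_S_le_Rad:
  fixes h1 h2 :: "real \<Rightarrow> real^'d::finite \<Rightarrow> real^'p::finite"
  assumes "LinfW1inf t1 dd h1" "LinfW1inf t1 dd h2"
  shows "enn2real (Linf_S t1 dd h1) \<le> Rad t1 dd h1 h2" "enn2real (Linf_S t1 dd h2) \<le> Rad t1 dd h1 h2"
proof -
  have "Linf_S t1 dd h1 < \<infinity>" "Linf_S t1 dd h2 < \<infinity>"
    by (intro LinfW1inf_coeff.Linf_S_finite LinfW1inf_coeff.intro assms)+
  then have "max (Linf_S t1 dd h1) (Linf_S t1 dd h2) < \<infinity>" by (simp add: max_def)
  then show "enn2real (Linf_S t1 dd h1) \<le> Rad t1 dd h1 h2" "enn2real (Linf_S t1 dd h2) \<le> Rad t1 dd h1 h2"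
    unfolding Rad_def by (auto intro: enn2real_mono)
qed

lemma DxLinf_S_le_Lam:
  fixes h1 h2 :: "real \<Rightarrow> real^'d::finite \<Rightarrow> real^'p::finite"
  assumes "LinfW1inf t1 dd h1" "LinfW1inf t1 dd h2"
  shows "1 + enn2real (DxLinf_S t1 dd h1) \<le> enn2real (Lam t1 dd h1 h2)"
proof -
  have "DxLinf_S t1 dd h1 < \<infinity>" "DxLinf_S t1 dd h2 < \<infinity>"
    by (intro LinfW1inf_coeff.DxLinf_S_finite LinfW1inf_coeff.intro assms)+
  then have fin: "max (DxLinf_S t1 dd h1) (DxLinf_S t1 dd h2) < \<infinity>" by (simp add: max_def)
  then have "enn2real (Lam t1 dd h1 h2) = 1 + enn2real (max (DxLinf_S t1 dd h1) (DxLinf_S t1 dd h2))"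
    unfolding Lam_def by (subst enn2real_plus) auto
  moreover have "enn2real (DxLinf_S t1 dd h1) \<le> enn2real (max (DxLinf_S t1 dd h1) (DxLinf_S t1 dd h2))"
    using fin by (intro enn2real_mono) auto
  ultimately show ?thesis by simp
qed

lemma L1_t_supn_diff_finite:
  fixes b1 b2 :: "real \<Rightarrow> real^'d::finite \<Rightarrow> real^'p::finite \<Rightarrow> real^'d"
  assumes bW1: "L1W1inf_loc t1 dd b1" and bW2: "L1W1inf_loc t1 dd b2" and R0: "0 \<le> R"
  shows "L1_t t1 (\<lambda>t. supn (Dom dd R) (bxy (\<lambda>t x y. b2 t x y - b1 t x y) t)) < \<infinity>"
proof -
  interpret B1: L1W1inf_drift t1 dd b1 by unfold_locales (rule bW1)
  interpret B2: L1W1inf_drift t1 dd b2 by unfold_locales (rule bW2)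
  obtain G1 where G1: "G1 \<in> borel_measurable borel"
    "\<And>t. continuous_on (Dom dd R) (bxy b1 t) \<Longrightarrow> supn (Dom dd R) (bxy b1 t) = G1 t"
    using borel_measurable_supn_representative[OF B1.measurable] by blast
  obtain G2 where G2: "G2 \<in> borel_measurable borel"
    "\<And>t. continuous_on (Dom dd R) (bxy b2 t) \<Longrightarrow> supn (Dom dd R) (bxy b2 t) = G2 t"
    using borel_measurable_supn_representative[OF B2.measurable] by blast
  show ?thesis
  proof (rule L1_t_finite_if_AE_le_add[OF G2(1) G1(1)])
    show "AE t in lborel. t \<in> {0<..<t1} \<longrightarrow> supn (Dom dd R) (bxy b2 t) = G2 t \<and> supn (Dom dd R) (bxy b1 t) = G1 t"
      using B1.AE_regular[OF R0] B2.AE_regular[OF R0] by eventually_elim (auto intro: G1(2) G2(2))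
    have "bxy (\<lambda>t x y. b2 t x y - b1 t x y) t = (\<lambda>z. bxy b2 t z - bxy b1 t z)" for t
      by (auto simp: bxy_def fun_eq_iff)
    then show "AE t in lborel. t \<in> {0<..<t1} \<longrightarrow> supn (Dom dd R) (bxy (\<lambda>t x y. b2 t x y - b1 t x y) t)
        \<le> supn (Dom dd R) (bxy b2 t) + supn (Dom dd R) (bxy b1 t)"
      by (simp add: supn_diff_le)
  qed (use B1.L1_t_finite[OF R0] B2.L1_t_finite[OF R0] in auto)
qed

lemma drift_difference_majorants:
  fixes b1 b2 :: "real \<Rightarrow> real^'d::finite \<Rightarrow> real^'p::finite \<Rightarrow> real^'d"
    and h1 h2 :: "real \<Rightarrow> real^'d \<Rightarrow> real^'p"
  assumes bW1: "L1W1inf_loc t1 dd b1" and bW2: "L1W1inf_loc t1 dd b2"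
    and hW1: "LinfW1inf t1 dd h1" and hW2: "LinfW1inf t1 dd h2"
  obtains Db Lb :: "real \<Rightarrow> real" where "\<And>t. 0 \<le> Lb t"
    and "\<And>q t0. 0 \<le> q \<Longrightarrow> t0 < t1 \<Longrightarrow> set_integrable lborel {q..t0} Db"
    and "\<And>q t0. 0 \<le> q \<Longrightarrow> t0 < t1 \<Longrightarrow>
           (LINT t:{q..t0}|lborel. Db t) \<le> enn2real (L1_h t1 dd h1 h2 (\<lambda>t x y. b2 t x y - b1 t x y))"
    and "\<And>q t0. 0 \<le> q \<Longrightarrow> t0 < t1 \<Longrightarrow> set_integrable lborel {q..t0} Lb"
    and "\<And>q t0. 0 \<le> q \<Longrightarrow> t0 < t1 \<Longrightarrow> (LINT t:{q..t0}|lborel. Lb t) \<le> enn2real (DL1_h t1 dd h1 h2 b1)"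
    and "AE r in lborel. r \<in> {0<..<t1} \<longrightarrow> (\<forall>x1\<in>Gbar dd. \<forall>x2\<in>Gbar dd.
           norm (b2 r x2 (h2 r x2) - b1 r x1 (h1 r x1))
             \<le> Db r + Lb r * (enn2real (Linf_S t1 dd (\<lambda>t x. h2 t x - h1 t x))
                               + enn2real (Lam t1 dd h1 h2) * norm (x2 - x1)))"
proof -
  interpret B1: L1W1inf_drift t1 dd b1 by unfold_locales (rule bW1)
  interpret B2: L1W1inf_drift t1 dd b2 by unfold_locales (rule bW2)
  interpret H1: LinfW1inf_coeff t1 dd h1 by unfold_locales (rule hW1)
  interpret H2: LinfW1inf_coeff t1 dd h2 by unfold_locales (rule hW2)
  define R where "R = Rad t1 dd h1 h2"
  have R0: "0 \<le> R" by (simp add: R_def Rad_def)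
  note reg1 = B1.AE_regular[OF R0] and reg2 = B2.AE_regular[OF R0]
  have bxy_diff: "bxy (\<lambda>t x y. b2 t x y - b1 t x y) t = (\<lambda>z. bxy b2 t z - bxy b1 t z)" for t
    by (auto simp: bxy_def fun_eq_iff)
  have "(\<lambda>(t,z). bxy (\<lambda>t x y. b2 t x y - b1 t x y) t z) = (\<lambda>q. (\<lambda>(t,z). bxy b2 t z) q - (\<lambda>(t,z). bxy b1 t z) q)"
    by (auto simp: bxy_def fun_eq_iff split: prod.splits)
  then have measD: "(\<lambda>(t,z). bxy (\<lambda>t x y. b2 t x y - b1 t x y) t z) \<in> borel_measurable borel"
    using borel_measurable_diff[OF B2.measurable B1.measurable] by simp
  have contD: "AE t in lborel. t \<in> {0<..<t1} \<longrightarrow> continuous_on (Dom dd R) (bxy (\<lambda>t x y. b2 t x y - b1 t x y) t)"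
    using reg1 reg2 by eventually_elim (auto simp: bxy_diff intro: continuous_on_diff)
  have cont1: "AE t in lborel. t \<in> {0<..<t1} \<longrightarrow> continuous_on (Dom dd R) (bxy b1 t)"
    using reg1 by eventually_elim auto
  obtain Db where Db: "AE t in lborel. t \<in> {0<..<t1} \<longrightarrow>
        Db t = enn2real (supn (Dom dd R) (bxy (\<lambda>t x y. b2 t x y - b1 t x y) t))"
    "\<And>q t0. 0 \<le> q \<Longrightarrow> t0 < t1 \<Longrightarrow> set_integrable lborel {q..t0} Db"
    "\<And>q t0. 0 \<le> q \<Longrightarrow> t0 < t1 \<Longrightarrow>
       (LINT t:{q..t0}|lborel. Db t) \<le> enn2real (L1_t t1 (\<lambda>t. supn (Dom dd R) (bxy (\<lambda>t x y. b2 t x y - b1 t x y) t)))"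
    by (rule supn_L1_majorant[OF measD contD L1_t_supn_diff_finite[OF bW1 bW2 R0]]) blast
  obtain Lb where Lb: "AE t in lborel. t \<in> {0<..<t1} \<longrightarrow> Lb t = enn2real (lipc (Dom dd R) (bxy b1 t))"
    "\<And>t. 0 \<le> Lb t" "\<And>q t0. 0 \<le> q \<Longrightarrow> t0 < t1 \<Longrightarrow> set_integrable lborel {q..t0} Lb"
    "\<And>q t0. 0 \<le> q \<Longrightarrow> t0 < t1 \<Longrightarrow> (LINT t:{q..t0}|lborel. Lb t) \<le> enn2real (L1_t t1 (\<lambda>t. lipc (Dom dd R) (bxy b1 t)))"
    by (rule lipc_L1_majorant[OF B1.measurable cont1 B1.L1_t_finite(2)[OF R0]]) blast
  show ?thesis
  proof (rule that[OF Lb(2) Db(2) _ Lb(3)])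
    show "(LINT t:{q..t0}|lborel. Db t) \<le> enn2real (L1_h t1 dd h1 h2 (\<lambda>t x y. b2 t x y - b1 t x y))"
      "(LINT t:{q..t0}|lborel. Lb t) \<le> enn2real (DL1_h t1 dd h1 h2 b1)" if "0 \<le> q" "t0 < t1" for q t0
      using Db(3)[OF that] Lb(4)[OF that] by (simp_all add: L1_h_def DL1_h_def R_def)
    show "AE r in lborel. r \<in> {0<..<t1} \<longrightarrow> (\<forall>x1\<in>Gbar dd. \<forall>x2\<in>Gbar dd.
        norm (b2 r x2 (h2 r x2) - b1 r x1 (h1 r x1)) \<le> Db r + Lb r * (enn2real (Linf_S t1 dd (\<lambda>t x. h2 t x - h1 t x))
           + enn2real (Lam t1 dd h1 h2) * norm (x2 - x1)))"
      using reg1 reg2 Db(1) Lb(1) H1.AE_norm_le_Linf_S_Gbar H2.AE_norm_le_Linf_S_Gbar H1.AE_lipschitz_on_Gbar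
        AE_norm_le_Linf_S_diff[OF hW1 hW2]
    proof eventually_elim
      case (elim r)
      show ?case
      proof (intro impI ballI)
        fix x1 x2 assume r: "r \<in> {0<..<t1}" and x: "x1 \<in> Gbar dd" "x2 \<in> Gbar dd"
        have reg: "supn (Dom dd R) (bxy b1 r) < \<infinity>" "supn (Dom dd R) (bxy b2 r) < \<infinity>"
            "lipc (Dom dd R) (bxy b1 r) < \<infinity>"
          and Db_r: "Db r = enn2real (supn (Dom dd R) (bxy (\<lambda>t x y. b2 t x y - b1 t x y) r))"
          and Lb_r: "Lb r = enn2real (lipc (Dom dd R) (bxy b1 r))"
          and h1_bnd: "\<forall>x\<in>Gbar dd. norm (h1 r x) \<le> enn2real (Linf_S t1 dd h1)"
          and h2_bnd: "\<forall>x\<in>Gbar dd. norm (h2 r x) \<le> enn2real (Linf_S t1 dd h2)"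
          and h1_lip: "(enn2real (DxLinf_S t1 dd h1))-lipschitz_on (Gbar dd) (h1 r)"
          and hd: "\<forall>x\<in>Gbar dd. norm (h2 r x - h1 r x) \<le> enn2real (Linf_S t1 dd (\<lambda>t x. h2 t x - h1 t x))"
          using elim r by simp_all
        have "supn (Dom dd R) (bxy (\<lambda>t x y. b2 t x y - b1 t x y) r) \<le> supn (Dom dd R) (bxy b2 r) + supn (Dom dd R) (bxy b1 r)"
          unfolding bxy_diff by (rule supn_diff_le)
        then have sf: "supn (Dom dd R) (bxy (\<lambda>t x y. b2 t x y - b1 t x y) r) < \<infinity>"
          using reg by (simp add: le_less_trans)
        have "norm (h1 r x1) \<le> R" "norm (h2 r x2) \<le> R"
          using h1_bnd h2_bnd x Linf_S_le_Rad[OF hW1 hW2] unfolding R_def by (meson order_trans)+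
        then have "norm (b2 r x2 (h2 r x2) - b1 r x1 (h1 r x1))
            \<le> enn2real (supn (Dom dd R) (bxy (\<lambda>t x y. b2 t x y - b1 t x y) r)) + enn2real (lipc (Dom dd R) (bxy b1 r))
              * (enn2real (Linf_S t1 dd (\<lambda>t x. h2 t x - h1 t x)) + enn2real (Lam t1 dd h1 h2) * norm (x2 - x1))"
          using hd[rule_format, OF x(2)] lipschitz_onD[OF h1_lip x(2,1)] reg(3) sf DxLinf_S_le_Lam[OF hW1 hW2]
          by (rule drift_composition_estimate[OF x])
        then show "norm (b2 r x2 (h2 r x2) - b1 r x1 (h1 r x1)) \<le> Db r + Lb r * (enn2real (Linf_S t1 dd (\<lambda>t x. h2 t x - h1 t x))
           + enn2real (Lam t1 dd h1 h2) * norm (x2 - x1))"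
          unfolding Db_r Lb_r .
      qed
    qed
  qed
qed

lemma is_sol_difference_integral_bound:
  assumes sol1: "is_sol dd b1 h1 t0 x0 tau1 X1" and sol2: "is_sol dd b2 h2 t0 x0 tau2 X2"
    and q: "0 \<le> q" "tau1 \<le> q" "tau2 \<le> q" "q \<le> t0" and t0: "t0 < t1"
    and drift: "AE r in lborel. r \<in> {0<..<t1} \<longrightarrow> (\<forall>x1\<in>Gbar dd. \<forall>x2\<in>Gbar dd.
        norm (b2 r x2 (h2 r x2) - b1 r x1 (h1 r x1)) \<le> Db r + Lb r * (eh + \<Lambda> * norm (x2 - x1)))"
    and Db: "set_integrable lborel {q..t0} Db" "(LINT r:{q..t0}|lborel. Db r) \<le> eb"
    and Lb: "set_integrable lborel {q..t0} Lb" "(LINT r:{q..t0}|lborel. Lb r) \<le> N" and "0 \<le> eh"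
  shows "norm (X2 q - X1 q) \<le> (eb + eh * N) + \<Lambda> * (LINT r:{q..t0}|lborel. Lb r * norm (X2 r - X1 r))"
proof -
  define u where "u r = norm (X2 r - X1 r)" for r
  define F1 where "F1 r = b1 r (X1 r) (h1 r (X1 r))" for r
  define F2 where "F2 r = b2 r (X2 r) (h2 r (X2 r))" for r
  have i1: "set_integrable lborel {q..t0} F1" and i2: "set_integrable lborel {q..t0} F2"
    using is_sol_integrable[OF sol1, of q] is_sol_integrable[OF sol2, of q] q by (auto simp: F1_def[abs_def] F2_def[abs_def])
  have "continuous_on {q..t0} X1" "continuous_on {q..t0} X2"
    using continuous_on_subset[OF continuous_on_is_sol[OF sol1]] continuous_on_subset[OF continuous_on_is_sol[OF sol2]] q
    by auto
  then have "continuous_on {q..t0} u" unfolding u_def by (intro continuous_intros)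
  then have iLu: "set_integrable lborel {q..t0} (\<lambda>r. \<Lambda> * (Lb r * u r))"
    by (intro set_integrable_mult_right set_integrable_mult_continuous Lb(1))
  have iB: "set_integrable lborel {q..t0} (\<lambda>r. eh * Lb r)" by (intro set_integrable_mult_right Lb(1))
  have "norm (X2 q - X1 q) = norm (LINT r:{q..t0}|lborel. F1 r - F2 r)"
    using is_sol_eq[OF sol1, of q] is_sol_eq[OF sol2, of q] set_integral_diff(2)[OF i1 i2] q
    by (simp add: F1_def F2_def)
  also have "\<dots> \<le> (LINT r:{q..t0}|lborel. Db r + (eh * Lb r + \<Lambda> * (Lb r * u r)))"
  proof (rule norm_set_integral_le_AE[OF set_integral_diff(1)[OF i1 i2]])
    show "set_integrable lborel {q..t0} (\<lambda>r. Db r + (eh * Lb r + \<Lambda> * (Lb r * u r)))"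
      by (intro set_integral_add(1) Db(1) iB iLu)
    show "AE r\<in>{q..t0} in lborel. norm (F1 r - F2 r) \<le> Db r + (eh * Lb r + \<Lambda> * (Lb r * u r))"
      using drift AE_lborel_singleton[of 0]
    proof eventually_elim
      case (elim r)
      show ?case
      proof
        assume r: "r \<in> {q..t0}"
        then have "r \<in> {0<..<t1}" "X1 r \<in> Gbar dd" "X2 r \<in> Gbar dd"
          using elim(2) q t0 is_sol_mem[OF sol1, of r] is_sol_mem[OF sol2, of r] by auto
        then have "norm (F2 r - F1 r) \<le> Db r + Lb r * (eh + \<Lambda> * u r)"
          using elim(1) by (simp add: F1_def F2_def u_def)
        then show "norm (F1 r - F2 r) \<le> Db r + (eh * Lb r + \<Lambda> * (Lb r * u r))"
          by (simp add: norm_minus_commute distrib_left mult.commute mult.left_commute)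
      qed
    qed
  qed
  also have "\<dots> = (LINT r:{q..t0}|lborel. Db r) + eh * (LINT r:{q..t0}|lborel. Lb r)
      + \<Lambda> * (LINT r:{q..t0}|lborel. Lb r * u r)"
    by (simp add: set_integral_add(2)[OF Db(1) set_integral_add(1)[OF iB iLu]] set_integral_add(2)[OF iB iLu]
        set_integral_mult_right add.assoc)
  also have "\<dots> \<le> eb + eh * N + \<Lambda> * (LINT r:{q..t0}|lborel. Lb r * u r)"
    using Db(2) mult_left_mono[OF Lb(2) \<open>0 \<le> eh\<close>] by linarith
  finally show ?thesis by (simp add: u_def)
qed

theorem is_sol_stability:
  fixes b1 b2 :: "real \<Rightarrow> real^'d::finite \<Rightarrow> real^'p::finite \<Rightarrow> real^'d"
    and h1 h2 :: "real \<Rightarrow> real^'d \<Rightarrow> real^'p"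
  assumes bW1: "L1W1inf_loc t1 dd b1" and bW2: "L1W1inf_loc t1 dd b2"
    and hW1: "LinfW1inf t1 dd h1" and hW2: "LinfW1inf t1 dd h2" and t0: "t0 < t1"
    and sol1: "is_sol dd b1 h1 t0 x0 tau1 X1" "0 \<le> tau1"
    and sol2: "is_sol dd b2 h2 t0 x0 tau2 X2" "0 \<le> tau2"
    and s: "s \<in> {max tau1 tau2..t0}"
  shows "norm (X2 s - X1 s) \<le>
           max 1 (enn2real (DL1_h t1 dd h1 h2 b1))
             * exp (enn2real (Lam t1 dd h1 h2) * enn2real (DL1_h t1 dd h1 h2 b1))
             * (enn2real (Linf_S t1 dd (\<lambda>t x. h2 t x - h1 t x))
                + enn2real (L1_h t1 dd h1 h2 (\<lambda>t x y. b2 t x y - b1 t x y)))"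
proof -
  define eh where "eh = enn2real (Linf_S t1 dd (\<lambda>t x. h2 t x - h1 t x))"
  define eb where "eb = enn2real (L1_h t1 dd h1 h2 (\<lambda>t x y. b2 t x y - b1 t x y))"
  define N where "N = enn2real (DL1_h t1 dd h1 h2 b1)"
  define \<Lambda> where "\<Lambda> = enn2real (Lam t1 dd h1 h2)"
  define T where "T = max tau1 tau2"
  have T: "0 \<le> T" "T \<le> t0" "s \<in> {T..t0}" using sol1(2) s by (auto simp: T_def)
  have nonneg: "0 \<le> eh" "0 \<le> eb" "0 \<le> N" "0 \<le> \<Lambda>" by (simp_all add: eh_def eb_def N_def \<Lambda>_def)
  obtain Db Lb where Lb0: "\<And>t. 0 \<le> Lb t"
    and Db_int: "\<And>q t0. 0 \<le> q \<Longrightarrow> t0 < t1 \<Longrightarrow> set_integrable lborel {q..t0} Db"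
    and Db_le: "\<And>q t0. 0 \<le> q \<Longrightarrow> t0 < t1 \<Longrightarrow>
           (LINT t:{q..t0}|lborel. Db t) \<le> enn2real (L1_h t1 dd h1 h2 (\<lambda>t x y. b2 t x y - b1 t x y))"
    and Lb_int: "\<And>q t0. 0 \<le> q \<Longrightarrow> t0 < t1 \<Longrightarrow> set_integrable lborel {q..t0} Lb"
    and Lb_le: "\<And>q t0. 0 \<le> q \<Longrightarrow> t0 < t1 \<Longrightarrow> (LINT t:{q..t0}|lborel. Lb t) \<le> enn2real (DL1_h t1 dd h1 h2 b1)"
    and drift: "AE r in lborel. r \<in> {0<..<t1} \<longrightarrow> (\<forall>x1\<in>Gbar dd. \<forall>x2\<in>Gbar dd.
           norm (b2 r x2 (h2 r x2) - b1 r x1 (h1 r x1))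
             \<le> Db r + Lb r * (enn2real (Linf_S t1 dd (\<lambda>t x. h2 t x - h1 t x))
                               + enn2real (Lam t1 dd h1 h2) * norm (x2 - x1)))"
    by (rule drift_difference_majorants[OF bW1 bW2 hW1 hW2]) blast
  have Db: "set_integrable lborel {q..t0} Db" "(LINT t:{q..t0}|lborel. Db t) \<le> eb"
    and Lb: "set_integrable lborel {q..t0} Lb" "(LINT t:{q..t0}|lborel. Lb t) \<le> N" if "0 \<le> q" for q
    using Db_int[OF that t0] Db_le[OF that t0] Lb_int[OF that t0] Lb_le[OF that t0]
    by (simp_all add: eb_def N_def)
  have ineq: "norm (X2 q - X1 q) \<le> (eb + eh * N) + \<Lambda> * (LINT r:{q..t0}|lborel. Lb r * norm (X2 r - X1 r))"
    if "q \<in> {T..t0}" for q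
  proof (rule is_sol_difference_integral_bound[OF sol1(1) sol2(1) _ _ _ _ t0 drift[folded eh_def \<Lambda>_def]])
    show "0 \<le> q" "tau1 \<le> q" "tau2 \<le> q" "q \<le> t0" using that T by (auto simp: T_def)
  qed (use Db Lb nonneg that T in auto)
  have "continuous_on {T..t0} X1" "continuous_on {T..t0} X2"
    using continuous_on_subset[OF continuous_on_is_sol[OF sol1(1)]]
      continuous_on_subset[OF continuous_on_is_sol[OF sol2(1)]] T by (auto simp: T_def)
  then have "continuous_on {T..t0} (\<lambda>r. norm (X2 r - X1 r))" by (intro continuous_intros)
  then have "norm (X2 s - X1 s) \<le> (eb + eh * N) * exp (\<Lambda> * N)"
    using nonneg by (intro gronwall_backward[OF T(2) Lb(1)[OF T(1)] Lb0 _ _ ineq _ _ Lb(2)[OF T(1)] T(3)]) auto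
  also have "\<dots> \<le> max 1 N * exp (\<Lambda> * N) * (eh + eb)"
  proof -
    have "eb + eh * N \<le> max 1 N * (eh + eb)"
      using nonneg mult_right_mono[of 1 "max 1 N" eb] mult_left_mono[of N "max 1 N" eh] by (simp add: algebra_simps)
    then show ?thesis by (simp add: mult_right_mono mult.commute mult.left_commute)
  qed
  finally show ?thesis by (simp add: eh_def eb_def N_def \<Lambda>_def)
qed

section \<open>Stability of the exit times\<close>

text \<open>If the second characteristic leaves first, through the top face, the first one is then at
height at least \<open>1 - e\<close> and climbs at rate \<open>B\<close>, so it leaves within time \<open>e / B\<close>.\<close>

lemma exit_time_comparison:
  assumes sol1: "is_sol dd b1 h1 t0 x0 tau1 X1"
    and tau: "0 \<le> tau1" "tau1 < tau2" "tau2 \<le> t0" and t0: "t0 < t1"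
    and top: "X2 tau2 $ dd = 1" and close: "norm (X2 tau2 - X1 tau2) \<le> e"
    and neg: "AE t in lborel. t \<in> {0<..<t1} \<longrightarrow> (\<forall>x\<in>Gbar dd. \<forall>y. b1 t x y $ dd \<le> - B)" and "0 < B"
    and speed: "AE t in lborel. t \<in> {0<..<t1} \<longrightarrow> (\<forall>x\<in>Gbar dd. norm (b1 t x (h1 t x)) \<le> V)" and "0 \<le> V"
  shows "\<bar>tau2 - tau1\<bar> + norm (X2 tau2 - X1 tau1) \<le> e + (1 + V) * (e / B)"
proof -
  have "\<bar>X2 tau2 $ dd - X1 tau2 $ dd\<bar> \<le> e"
    using component_le_norm_cart[of "X2 tau2 - X1 tau2" dd] close by simp
  moreover have "X1 tau2 $ dd + B * (tau2 - tau1) \<le> X1 tau1 $ dd"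
    by (rule is_sol_nth_increase[OF sol1 neg]) (use tau t0 in auto)
  moreover have "X1 tau1 $ dd \<le> 1" using Gbar_nth_bounds[OF is_sol_mem[OF sol1, of tau1]] tau by auto
  ultimately have "B * (tau2 - tau1) \<le> e" using top by linarith
  then have dt: "tau2 - tau1 \<le> e / B" using \<open>0 < B\<close> by (simp add: le_divide_eq mult.commute)
  have "norm (X1 tau1 - X1 tau2) \<le> V * (tau2 - tau1)"
    by (rule is_sol_speed[OF sol1 speed]) (use tau t0 in auto)
  then have "norm (X2 tau2 - X1 tau1) \<le> e + V * (tau2 - tau1)"
    using norm_triangle_ineq[of "X2 tau2 - X1 tau2" "X1 tau2 - X1 tau1"] close
    by (simp add: norm_minus_commute)
  then have "\<bar>tau2 - tau1\<bar> + norm (X2 tau2 - X1 tau1) \<le> e + (1 + V) * (tau2 - tau1)"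
    using tau by (simp add: algebra_simps)
  also have "\<dots> \<le> e + (1 + V) * (e / B)"
    using dt \<open>0 \<le> V\<close> by (intro add_left_mono mult_left_mono) auto
  finally show ?thesis .
qed

lemma exit_constant_le:
  fixes w N Lm V B1 B2 :: real
  assumes "0 \<le> w" "0 \<le> N" "0 \<le> Lm" "0 \<le> V" "0 < B1" "0 < B2"
  defines "C \<equiv> 1 + 1 / B1 + 1 / B2"
  shows "max 1 N * exp (Lm * N) * w * (1 + (1 + V) * (1 / B1 + 1 / B2))
           \<le> C * (1 + V) * (1 + N) * exp (C * (V + Lm * N)) * w"
proof -
  have "max 1 N * exp (Lm * N) * w * (1 + (1 + V) * (1 / B1 + 1 / B2))
      \<le> ((1 + N) * exp (C * (V + Lm * N)) * w) * (C * (1 + V))"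
  proof (rule mult_mono)
    have "Lm * N \<le> C * (V + Lm * N)"
      using assms by (simp add: C_def algebra_simps add_nonneg_nonneg mult_nonneg_nonneg)
    then show "max 1 N * exp (Lm * N) * w \<le> (1 + N) * exp (C * (V + Lm * N)) * w"
      using assms by (intro mult_right_mono mult_mono) auto
    show "1 + (1 + V) * (1 / B1 + 1 / B2) \<le> C * (1 + V)"
      using assms by (simp add: C_def algebra_simps)
  qed (use assms in auto)
  then show ?thesis by (simp add: algebra_simps)
qed

theorem exit_stability:
  fixes b1 b2 :: "real \<Rightarrow> real^'d::finite \<Rightarrow> real^'p::finite \<Rightarrow> real^'d"
    and h1 h2 :: "real \<Rightarrow> real^'d \<Rightarrow> real^'p"
  assumes L1: "Lminus t1 dd b1" and L2: "Lminus t1 dd b2"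
    and B1: "B1 > 0" and B2: "B2 > 0" and n1: "bd_neg t1 dd B1 b1" and n2: "bd_neg t1 dd B2 b2"
    and hW1: "LinfW1inf t1 dd h1" and hW2: "LinfW1inf t1 dd h2"
    and t0: "t0 < t1" and x0: "x0 \<in> Gset dd"
    and ms1: "max_sol dd b1 h1 t0 x0 tau1 X1" and ms2: "max_sol dd b2 h2 t0 x0 tau2 X2"
    and M1: "Linf_h t1 dd h1 h1 b1 \<le> ennreal M" and M2: "Linf_h t1 dd h2 h2 b2 \<le> ennreal M"
  defines "C \<equiv> 1 + 1 / B1 + 1 / B2"
    and "V \<equiv> max (enn2real (Linf_h t1 dd h1 h1 b1)) (enn2real (Linf_h t1 dd h2 h2 b2))"
    and "N \<equiv> enn2real (DL1_h t1 dd h1 h2 b1)"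
    and "Lm \<equiv> enn2real (Lam t1 dd h1 h2)"
  shows "\<bar>tau2 - tau1\<bar> + norm (X2 tau2 - X1 tau1)
           \<le> C * (1 + V) * (1 + N) * exp (C * (V + Lm * N))
             * (enn2real (Linf_S t1 dd (\<lambda>t x. h2 t x - h1 t x))
                + enn2real (L1_h t1 dd h1 h2 (\<lambda>t x y. b2 t x y - b1 t x y)))"
proof -
  have bW1: "L1W1inf_loc t1 dd b1" and bW2: "L1W1inf_loc t1 dd b2"
    using L1 L2 by (simp_all add: Lminus_def)
  have neg1: "AE t in lborel. t \<in> {0<..<t1} \<longrightarrow> (\<forall>x\<in>Gbar dd. \<forall>y. b1 t x y $ dd \<le> - B1)"
    using L1 by (intro L1W1inf_drift.AE_bd_neg_Gbar[OF L1W1inf_drift.intro[OF bW1] _ n1]) (simp add: Lminus_def)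
  have neg2: "AE t in lborel. t \<in> {0<..<t1} \<longrightarrow> (\<forall>x\<in>Gbar dd. \<forall>y. b2 t x y $ dd \<le> - B2)"
    using L2 by (intro L1W1inf_drift.AE_bd_neg_Gbar[OF L1W1inf_drift.intro[OF bW2] _ n2]) (simp add: Lminus_def)
  have sol1: "is_sol dd b1 h1 t0 x0 tau1 X1" "0 \<le> tau1" "tau1 \<le> t0"
    and sol2: "is_sol dd b2 h2 t0 x0 tau2 X2" "0 \<le> tau2" "tau2 \<le> t0"
    using ms1 ms2 by (auto simp: max_sol_def)
  define w where "w = enn2real (Linf_S t1 dd (\<lambda>t x. h2 t x - h1 t x)) + enn2real (L1_h t1 dd h1 h2 (\<lambda>t x y. b2 t x y - b1 t x y))"
  define e where "e = max 1 N * exp (Lm * N) * w"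
  have nonneg: "0 \<le> w" "0 \<le> N" "0 \<le> Lm" "0 \<le> V" "0 \<le> e"
    by (simp_all add: w_def N_def Lm_def V_def e_def le_max_iff_disj)
  have close: "norm (X2 s - X1 s) \<le> e" if "s \<in> {max tau1 tau2..t0}" for s
    using is_sol_stability[OF bW1 bW2 hW1 hW2 t0 sol1(1,2) sol2(1,2) that]
    by (simp add: e_def w_def N_def Lm_def)
  have fin1: "Linf_h t1 dd h1 h1 b1 < \<infinity>" and fin2: "Linf_h t1 dd h2 h2 b2 < \<infinity>"
    using M1 M2 by (auto intro: le_less_trans)
  have speed1: "AE t in lborel. t \<in> {0<..<t1} \<longrightarrow> (\<forall>x\<in>Gbar dd. norm (b1 t x (h1 t x)) \<le> V)"
    using AE_drift_norm_le_Linf_h[OF hW1 fin1] by eventually_elim (force simp: V_def)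
  have speed2: "AE t in lborel. t \<in> {0<..<t1} \<longrightarrow> (\<forall>x\<in>Gbar dd. norm (b2 t x (h2 t x)) \<le> V)"
    using AE_drift_norm_le_Linf_h[OF hW2 fin2] by eventually_elim (force simp: V_def)
  have "\<bar>tau2 - tau1\<bar> + norm (X2 tau2 - X1 tau1) \<le> e + (1 + V) * (e / B1 + e / B2)"
  proof (cases tau1 tau2 rule: linorder_cases)
    case less
    have top: "X2 tau2 $ dd = 1"
      by (rule max_sol_exit_top[OF bW2 hW2 neg2 _ t0 x0 ms2]) (use less sol1 B2 in auto)
    have near: "norm (X2 tau2 - X1 tau2) \<le> e" using close[of tau2] less sol2 by auto
    have "\<bar>tau2 - tau1\<bar> + norm (X2 tau2 - X1 tau1) \<le> e + (1 + V) * (e / B1)"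
      using sol1(1,2) less sol2(3) t0 top near neg1 B1 speed1 nonneg(4) by (rule exit_time_comparison)
    moreover have "(1 + V) * (e / B1) \<le> (1 + V) * (e / B1 + e / B2)"
      using nonneg B2 by (intro mult_left_mono) auto
    ultimately show ?thesis by linarith
  next
    case equal
    moreover have "0 \<le> (1 + V) * (e / B1 + e / B2)" using nonneg B1 B2 by simp
    ultimately show ?thesis using close[of tau2] sol2 by simp
  next
    case greater
    have top: "X1 tau1 $ dd = 1"
      by (rule max_sol_exit_top[OF bW1 hW1 neg1 _ t0 x0 ms1]) (use greater sol2 B1 in auto)
    have near: "norm (X1 tau1 - X2 tau1) \<le> e" using close[of tau1] greater sol1 by (auto simp: norm_minus_commute)
    have "\<bar>tau1 - tau2\<bar> + norm (X1 tau1 - X2 tau2) \<le> e + (1 + V) * (e / B2)"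
      using sol2(1,2) greater sol1(3) t0 top near neg2 B2 speed2 nonneg(4) by (rule exit_time_comparison)
    moreover have "(1 + V) * (e / B2) \<le> (1 + V) * (e / B1 + e / B2)"
      using nonneg B1 by (intro mult_left_mono) auto
    ultimately show ?thesis by (simp add: norm_minus_commute abs_minus_commute)
  qed
  also have "\<dots> = e * (1 + (1 + V) * (1 / B1 + 1 / B2))" by (simp add: field_simps)
  also have "\<dots> \<le> C * (1 + V) * (1 + N) * exp (C * (V + Lm * N)) * w"
    unfolding e_def C_def using nonneg(1-4) B1 B2 by (rule exit_constant_le)
  finally show ?thesis by (simp add: w_def)
qed

theorem lemma5p3:
  fixes t1 :: real and dd :: "'d::finite"
  assumes "t1 > 0"
  shows
   "(\<forall>(b1 :: real \<Rightarrow> real^'d \<Rightarrow> real^'p::finite \<Rightarrow> real^'d) b2 h1 h2 B1 B2 t0 x0 X1 X2 tau1 tau2.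
      L1W1inf_loc t1 dd b1 \<and> L1W1inf_loc t1 dd b2 \<and> bd_indep_y dd b1 \<and> bd_indep_y dd b2 \<and>
      B1 > 0 \<and> B2 > 0 \<and> bd_neg t1 dd B1 b1 \<and> bd_neg t1 dd B2 b2 \<and>
      0 < t0 \<and> t0 < t1 \<and> x0 \<in> Gset dd \<and>
      LinfW1inf t1 dd h1 \<and> LinfW1inf t1 dd h2 \<and>
      max_sol dd b1 h1 t0 x0 tau1 X1 \<and> max_sol dd b2 h2 t0 x0 tau2 X2 \<longrightarrow>
      (\<forall>s\<in>{max tau1 tau2..t0}.
         norm (X2 s - X1 s) \<le>
           max 1 (enn2real (DL1_h t1 dd h1 h2 b1))
             * exp (enn2real (Lam t1 dd h1 h2) * enn2real (DL1_h t1 dd h1 h2 b1))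
             * (enn2real (Linf_S t1 dd (\<lambda>t x. h2 t x - h1 t x))
                + enn2real (L1_h t1 dd h1 h2 (\<lambda>t x y. b2 t x y - b1 t x y)))))
    \<and>
    (\<exists>Cf :: real \<Rightarrow> real \<Rightarrow> real \<Rightarrow> real \<Rightarrow> real \<Rightarrow> real.
      \<forall>(b1 :: real \<Rightarrow> real^'d \<Rightarrow> real^'p \<Rightarrow> real^'d) h1 B1.
        Lminus t1 dd b1 \<and> B1 > 0 \<and> bd_neg t1 dd B1 b1 \<and> LinfW1inf t1 dd h1 \<longrightarrow>
        (\<forall>M>0. \<exists>\<delta>>0. \<forall>b2 h2 B2 t0 x0 X1 X2 tau1 tau2.
           Lminus t1 dd b2 \<and> B2 > 0 \<and> bd_neg t1 dd B2 b2 \<and> LinfW1inf t1 dd h2 \<and>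
           0 < t0 \<and> t0 < t1 \<and> x0 \<in> Gset dd \<and>
           max_sol dd b1 h1 t0 x0 tau1 X1 \<and> max_sol dd b2 h2 t0 x0 tau2 X2 \<and>
           Linf_S t1 dd (\<lambda>t x. h2 t x - h1 t x) < ennreal \<delta> \<and>
           L1_h t1 dd h1 h2 (\<lambda>t x y. b2 t x y - b1 t x y) < ennreal \<delta> \<and>
           Linf_h t1 dd h1 h1 b1 \<le> ennreal M \<and> Linf_h t1 dd h2 h2 b2 \<le> ennreal M \<longrightarrow>
           (let C = Cf B1 B2 (enn2real (bd_L1Linf t1 dd b1)) (enn2real (bd_L1Linf t1 dd b2))
                       (enn2real (Dbd_L1Linf t1 dd b1));
                V = max (enn2real (Linf_h t1 dd h1 h1 b1)) (enn2real (Linf_h t1 dd h2 h2 b2));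
                N = enn2real (DL1_h t1 dd h1 h2 b1);
                Lm = enn2real (Lam t1 dd h1 h2)
            in \<bar>tau2 - tau1\<bar> + norm (X2 tau2 - X1 tau1)
               \<le> C * (1 + V) * (1 + N) * exp (C * (V + Lm * N))
                   * (enn2real (Linf_S t1 dd (\<lambda>t x. h2 t x - h1 t x))
                      + enn2real (L1_h t1 dd h1 h2 (\<lambda>t x y. b2 t x y - b1 t x y))))))"
  \<comment> \<open>no smallness is needed for the exit estimate, so any \<open>\<delta>\<close> works\<close>
  apply (intro conjI exI[of _ "\<lambda>B1 B2 _ _ _. 1 + 1 / B1 + 1 / B2"] allI impI ballI exI[of _ "1::real"])
  subgoal by (elim conjE, rule is_sol_stability) (auto simp: max_sol_def)
  subgoal by simp
  subgoal unfolding Let_def by (elim conjE, rule exit_stability) assumption+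
  done
end
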